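(* Let $(X,d)$ be a u.l.f. metric space, $h\colon X\to\mathbb{R}$ coarse, and $\beta\in\mathbb{R}$. Let $\varphi$ be a state on $\ell_\infty(X)$. Then $\varphi\circ E$ is a $(\sigma_h,\beta)$-KMS state on $\mathrm{C}^*_u(X)$ if and only if for every partial translation $f\colon A\to f(A)$ of $X$, $$\varphi(\chi_{f(A)})=\varphi(g_f),$$ where $g_f\in\ell_\infty(X)$ is given by $g_f(x)=e^{\beta(h(x)-h(f(x)))}$ for $x\in A$ and $g_f(x)=0$ for $x\notin A$.
   Context: A metric space is u.l.f. if for every $r>0$ the cardinalities of its balls of radius $r$ are uniformly bounded. $\mathrm{C}^*_u(X)$ is the norm closure of the $^*$-algebra of operators $a$ on $\ell_2(X)$ with $\sup\{d(x,y):a_{x,y}\neq0\}<\infty$, $a_{x,y}=\langle a\delta_y,\delta_x\rangle$. $\ell_\infty(X)$ is identified with the diagonal operators; $\chi_B$ is the projection onto $\ell_2(B)$; $E\colon\mathrm{C}^*_u(X)\to\ell_\infty(X)$ is the canonical conditional expectation keeping only the diagonal entries $a_{x,x}$. A partial translation of $X$ is a bijection $f\colon A\to B$ between subsets of $X$ with $\sup_{x\in A}d(x,f(x))<\infty$ (so $g_f$ is bounded). $h$ is coarse if for each $r>0$ there is $s>0$ with $d(x,y)<r\Rightarrow|h(x)-h(y)|<s$. $\sigma_{h,t}(a)=e^{it\bar h}ae^{-it\bar h}$ with $e^{it\bar h}\delta_x=e^{ith(x)}\delta_x$. A state $\varphi$ is $(\sigma_h,\beta)$-KMS if $\varphi(a\sigma_{h,i\beta}(b))=\varphi(ba)$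 for all $a$ and all analytic $b$ (those for which $t\mapsto\sigma_{h,t}(b)$ extends to an entire function). *)

theory Defs
  imports "HOL-Analysis.Analysis"
begin

text \<open>Operators on ell2(X) are represented by their matrices
  a x y = <a delta_y, delta_x>, i.e. functions of type 'a => 'a => complex.
  The metric space X is the whole type 'a (class metric_space).\<close>

type_synonym 'a mat = "'a \<Rightarrow> 'a \<Rightarrow> complex"

definition ulf :: "'a::metric_space itself \<Rightarrow> bool" where
  "ulf _ \<longleftrightarrow> (\<forall>r>0. \<exists>N::nat. \<forall>x::'a. finite (ball x r) \<and> card (ball x r) \<le> N)"

definition coarse_fun :: "('a::metric_space \<Rightarrow> real) \<Rightarrow> bool" where
  "coarse_fun h \<longleftrightarrow> (\<forall>r>0. \<exists>s>0. \<forall>x y. dist x y < r \<longrightarrow> \<bar>h x - h y\<bar> < s)"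

definition in_l2 :: "('a \<Rightarrow> complex) \<Rightarrow> bool" where
  "in_l2 v \<longleftrightarrow> (\<lambda>x. (cmod (v x))\<^sup>2) summable_on UNIV"

definition l2norm :: "('a \<Rightarrow> complex) \<Rightarrow> real" where
  "l2norm v = sqrt (infsum (\<lambda>x. (cmod (v x))\<^sup>2) UNIV)"

definition mat_apply :: "'a mat \<Rightarrow> ('a \<Rightarrow> complex) \<Rightarrow> ('a \<Rightarrow> complex)" where
  "mat_apply a v = (\<lambda>x. infsum (\<lambda>y. a x y * v y) UNIV)"

definition bdd_op :: "'a mat \<Rightarrow> bool" where
  "bdd_op a \<longleftrightarrow> (\<exists>C. \<forall>v. in_l2 v \<longrightarrow>
      (\<forall>x. (\<lambda>y. a x y * v y) summable_on UNIV) \<and> in_l2 (mat_apply a v) \<and>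
      l2norm (mat_apply a v) \<le> C * l2norm v)"

definition opnorm :: "'a mat \<Rightarrow> real" where
  "opnorm a = Sup {l2norm (mat_apply a v) | v. in_l2 v \<and> l2norm v \<le> 1}"

definition mat_add :: "'a mat \<Rightarrow> 'a mat \<Rightarrow> 'a mat" where
  "mat_add a b = (\<lambda>x y. a x y + b x y)"

definition mat_sub :: "'a mat \<Rightarrow> 'a mat \<Rightarrow> 'a mat" where
  "mat_sub a b = (\<lambda>x y. a x y - b x y)"

definition mat_scale :: "complex \<Rightarrow> 'a mat \<Rightarrow> 'a mat" where
  "mat_scale c a = (\<lambda>x y. c * a x y)"

definition mat_mult :: "'a mat \<Rightarrow> 'a mat \<Rightarrow> 'a mat" where
  "mat_mult a b = (\<lambda>x z. infsum (\<lambda>y. a x y * b y z) UNIV)"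

definition mat_adj :: "'a mat \<Rightarrow> 'a mat" where
  "mat_adj a = (\<lambda>x y. cnj (a y x))"

definition mat_one :: "'a mat" where
  "mat_one = (\<lambda>x y. if x = y then 1 else 0)"

definition finite_prop :: "'a::metric_space mat \<Rightarrow> bool" where
  "finite_prop a \<longleftrightarrow> (\<exists>R. \<forall>x y. a x y \<noteq> 0 \<longrightarrow> dist x y \<le> R)"

definition in_roe :: "'a::metric_space mat \<Rightarrow> bool" where
  "in_roe a \<longleftrightarrow> bdd_op a \<and>
     (\<forall>\<epsilon>>0. \<exists>b. bdd_op b \<and> finite_prop b \<and> opnorm (mat_sub a b) < \<epsilon>)"

definition cond_exp :: "'a mat \<Rightarrow> ('a \<Rightarrow> complex)" where
  "cond_exp a = (\<lambda>x. a x x)"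

definition in_linfty :: "('a \<Rightarrow> complex) \<Rightarrow> bool" where
  "in_linfty f \<longleftrightarrow> bounded (range f)"

definition nonneg_cplx :: "complex \<Rightarrow> bool" where
  "nonneg_cplx z \<longleftrightarrow> Im z = 0 \<and> Re z \<ge> 0"

definition linfty_state :: "(('a \<Rightarrow> complex) \<Rightarrow> complex) \<Rightarrow> bool" where
  "linfty_state \<phi> \<longleftrightarrow>
     (\<forall>f g. in_linfty f \<longrightarrow> in_linfty g \<longrightarrow> \<phi> (\<lambda>x. f x + g x) = \<phi> f + \<phi> g) \<and>
     (\<forall>c f. in_linfty f \<longrightarrow> \<phi> (\<lambda>x. c * f x) = c * \<phi> f) \<and>
     (\<forall>f. in_linfty f \<longrightarrow> nonneg_cplx (\<phi> (\<lambda>x. cnj (f x) * f x))) \<and>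
     \<phi> (\<lambda>x. 1) = 1"

definition roe_state :: "('a::metric_space mat \<Rightarrow> complex) \<Rightarrow> bool" where
  "roe_state \<psi> \<longleftrightarrow>
     (\<forall>a b. in_roe a \<longrightarrow> in_roe b \<longrightarrow> \<psi> (mat_add a b) = \<psi> a + \<psi> b) \<and>
     (\<forall>c a. in_roe a \<longrightarrow> \<psi> (mat_scale c a) = c * \<psi> a) \<and>
     (\<forall>a. in_roe a \<longrightarrow> nonneg_cplx (\<psi> (mat_mult (mat_adj a) a))) \<and>
     \<psi> mat_one = 1"

text \<open>sigma_{h,t}(a) = e^{it h} a e^{-it h}, in matrix form.\<close>
definition sigma :: "('a \<Rightarrow> real) \<Rightarrow> real \<Rightarrow> 'a mat \<Rightarrow> 'a mat" where
  "sigma h t a = (\<lambda>x y. exp (\<i> * of_real (t * h x)) * a x y * exp (- \<i> * of_real (t * h y)))"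

definition entire_ext :: "('a::metric_space \<Rightarrow> real) \<Rightarrow> 'a mat \<Rightarrow> (complex \<Rightarrow> 'a mat) \<Rightarrow> bool" where
  "entire_ext h b F \<longleftrightarrow>
     (\<forall>z. in_roe (F z)) \<and>
     (\<forall>t::real. F (of_real t) = sigma h t b) \<and>
     (\<forall>z. \<exists>D. in_roe D \<and>
        ((\<lambda>w. opnorm (mat_sub (mat_sub (F w) (F z)) (mat_scale (w - z) D)) / cmod (w - z))
           \<longlongrightarrow> 0) (at z))"

definition analytic_elt :: "('a::metric_space \<Rightarrow> real) \<Rightarrow> 'a mat \<Rightarrow> bool" where
  "analytic_elt h b \<longleftrightarrow> in_roe b \<and> (\<exists>F. entire_ext h b F)"

text \<open>(sigma_h, beta)-KMS state on C*_u(X); sigma_{h,i beta}(b) = F(i beta)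
  for the (unique) entire extension F.\<close>
definition kms_state :: "('a::metric_space \<Rightarrow> real) \<Rightarrow> real \<Rightarrow> ('a mat \<Rightarrow> complex) \<Rightarrow> bool" where
  "kms_state h \<beta> \<psi> \<longleftrightarrow> roe_state \<psi> \<and>
     (\<forall>a b F. in_roe a \<longrightarrow> in_roe b \<longrightarrow> entire_ext h b F \<longrightarrow>
        \<psi> (mat_mult a (F (\<i> * of_real \<beta>))) = \<psi> (mat_mult b a))"

definition partial_translation :: "('a::metric_space \<Rightarrow> 'a) \<Rightarrow> 'a set \<Rightarrow> bool" where
  "partial_translation f A \<longleftrightarrow> inj_on f A \<and> (\<exists>R. \<forall>x\<in>A. dist x (f x) \<le> R)"

definition chi :: "'a set \<Rightarrow> ('a \<Rightarrow> complex)" where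
  "chi B = (\<lambda>x. if x \<in> B then 1 else 0)"

definition g_fun :: "('a \<Rightarrow> real) \<Rightarrow> real \<Rightarrow> ('a \<Rightarrow> 'a) \<Rightarrow> 'a set \<Rightarrow> ('a \<Rightarrow> complex)" where
  "g_fun h \<beta> f A = (\<lambda>x. if x \<in> A then of_real (exp (\<beta> * (h x - h (f x)))) else 0)"

end

theory Submission
  imports Defs "HOL-Complex_Analysis.Complex_Analysis"
begin

text \<open>Since \<open>\<phi> \<circ> E\<close> only sees diagonals, the KMS condition for it is an identity between
  diagonals of products.

  If \<open>\<phi> \<circ> E\<close> is KMS, test it on the partial isometry \<open>v\<close> with \<open>v \<delta>_x = \<delta>_(f x)\<close>
  for \<open>x \<in> A\<close>, and on its adjoint \<open>v*\<close>: the orbit of \<open>v\<close> extends to the entire function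
  \<open>z \<mapsto> e^(i z (h \<circ> f - h)) v\<close>, and the diagonals of \<open>v* \<sigma>_(i \<beta>)(v)\<close> and \<open>v v*\<close> are
  \<open>g_f\<close> and \<open>\<chi>_(f A)\<close>.

  Conversely, linearity and uniform approximation by finitely valued functions extend the
  hypothesis to \<open>\<phi>(u g_f) = \<phi>((u \<circ> f\<inverse>) \<chi>_(f A))\<close> for bounded \<open>u\<close>. By uniform local
  finiteness the kernel of a finite-propagation operator splits into finitely many pieces
  supported on graphs of partial translations, which gives the KMS identity for such operators;
  a general element of the uniform Roe algebra is a norm limit of them.\<close>

section \<open>Bounded functions and states on \<open>\<ell>\<^sub>\<infinity>(X)\<close>\<close>

lemma in_linfty_iff: "in_linfty f \<longleftrightarrow> (\<exists>M. \<forall>x. cmod (f x) \<le> M)"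
  unfolding in_linfty_def bounded_iff by auto

lemma in_linftyI: "(\<And>x. cmod (f x) \<le> M) \<Longrightarrow> in_linfty f"
  unfolding in_linfty_iff by blast

lemma in_linfty_add: "in_linfty f \<Longrightarrow> in_linfty g \<Longrightarrow> in_linfty (\<lambda>x. f x + g x)"
  unfolding in_linfty_iff by (meson add_mono norm_triangle_le)

lemma in_linfty_mult: "in_linfty f \<Longrightarrow> in_linfty g \<Longrightarrow> in_linfty (\<lambda>x. f x * g x)"
  unfolding in_linfty_iff
proof (elim exE)
  fix M N assume M: "\<forall>x. cmod (f x) \<le> M" and N: "\<forall>x. cmod (g x) \<le> N"
  have "cmod (f x * g x) \<le> M * N" for x
    unfolding norm_mult using M N by (meson mult_mono norm_ge_zero order_trans)
  then show "\<exists>M. \<forall>x. cmod (f x * g x) \<le> M" by blast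
qed

lemma in_linfty_const: "in_linfty (\<lambda>x. c)"
  by (rule in_linftyI[of _ "cmod c"]) simp

lemma in_linfty_cmult: "in_linfty f \<Longrightarrow> in_linfty (\<lambda>x. c * f x)"
  by (rule in_linfty_mult[OF in_linfty_const])

lemma in_linfty_sum:
  "finite V \<Longrightarrow> (\<And>v. v \<in> V \<Longrightarrow> in_linfty (g v)) \<Longrightarrow> in_linfty (\<lambda>x. \<Sum>v\<in>V. g v x)"
  by (induction V rule: finite_induct) (auto intro: in_linfty_add in_linfty_const)

lemma in_linfty_chi: "in_linfty (chi B)"
  by (rule in_linftyI[of _ 1]) (simp add: chi_def)

context
  fixes \<phi> :: "('a \<Rightarrow> complex) \<Rightarrow> complex"
  assumes state: "linfty_state \<phi>"
begin

lemma linfty_state_add: "in_linfty f \<Longrightarrow> in_linfty g \<Longrightarrow> \<phi> (\<lambda>x. f x + g x) = \<phi> f + \<phi> g"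
  using state unfolding linfty_state_def by blast

lemma linfty_state_scale: "in_linfty f \<Longrightarrow> \<phi> (\<lambda>x. c * f x) = c * \<phi> f"
  using state unfolding linfty_state_def by blast

lemma linfty_state_pos: "in_linfty f \<Longrightarrow> nonneg_cplx (\<phi> (\<lambda>x. cnj (f x) * f x))"
  using state unfolding linfty_state_def by blast

lemma linfty_state_one: "\<phi> (\<lambda>x. 1) = 1"
  using state unfolding linfty_state_def by blast

lemma linfty_state_const: "\<phi> (\<lambda>x. c) = c"
  using linfty_state_scale[of "\<lambda>x. 1" c, OF in_linfty_const] linfty_state_one by simp

lemma linfty_state_diff: "in_linfty f \<Longrightarrow> in_linfty g \<Longrightarrow> \<phi> (\<lambda>x. f x - g x) = \<phi> f - \<phi> g"
  using linfty_state_add[of f "\<lambda>x. (-1) * g x"] linfty_state_scale[of g "-1"] in_linfty_cmult[of g "-1"]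
  by simp

lemma linfty_state_sum:
  "finite V \<Longrightarrow> (\<And>v. v \<in> V \<Longrightarrow> in_linfty (g v)) \<Longrightarrow> \<phi> (\<lambda>x. \<Sum>v\<in>V. g v x) = (\<Sum>v\<in>V. \<phi> (g v))"
proof (induction V rule: finite_induct)
  case empty
  then show ?case using linfty_state_const[of 0] by simp
next
  case (insert v V)
  have "\<phi> (\<lambda>x. \<Sum>w\<in>insert v V. g w x) = \<phi> (\<lambda>x. g v x + (\<Sum>w\<in>V. g w x))"
    using insert by simp
  also have "\<dots> = \<phi> (g v) + \<phi> (\<lambda>x. \<Sum>w\<in>V. g w x)"
    using insert by (intro linfty_state_add) (auto intro: in_linfty_sum)
  finally show ?case using insert by simp
qed

lemma linfty_state_sum_scale:
  "finite V \<Longrightarrow> (\<And>v. v \<in> V \<Longrightarrow> in_linfty (g v)) \<Longrightarrow>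
    \<phi> (\<lambda>x. \<Sum>v\<in>V. v * g v x) = (\<Sum>v\<in>V. v * \<phi> (g v))"
  by (simp add: linfty_state_sum in_linfty_cmult linfty_state_scale)

lemma linfty_state_nonneg:
  assumes "\<And>x. p x \<ge> 0" and "\<And>x. p x \<le> M"
  shows "nonneg_cplx (\<phi> (\<lambda>x. complex_of_real (p x)))"
proof -
  let ?s = "\<lambda>x. complex_of_real (sqrt (p x))"
  have "in_linfty ?s" by (rule in_linftyI[of _ "sqrt M"]) (use assms in auto)
  then have "nonneg_cplx (\<phi> (\<lambda>x. cnj (?s x) * ?s x))" by (rule linfty_state_pos)
  moreover have "(\<lambda>x. cnj (?s x) * ?s x) = (\<lambda>x. complex_of_real (p x))"
    using assms by (auto simp flip: of_real_mult)
  ultimately show ?thesis by simp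
qed

text \<open>Positivity applied to the nonnegative functions \<open>M \<plusminus> r\<close>.\<close>
lemma linfty_state_real_bound:
  assumes "\<And>x. \<bar>r x\<bar> \<le> M"
  shows "Im (\<phi> (\<lambda>x. complex_of_real (r x))) = 0 \<and> \<bar>Re (\<phi> (\<lambda>x. complex_of_real (r x)))\<bar> \<le> M"
proof -
  let ?r = "\<lambda>x. complex_of_real (r x)"
  have r: "in_linfty ?r" by (rule in_linftyI[of _ M]) (use assms in auto)
  have M: "0 \<le> M - r x" "0 \<le> M + r x" "M - r x \<le> 2 * M" "M + r x \<le> 2 * M" for x
    using assms[of x] by auto
  have "nonneg_cplx (\<phi> (\<lambda>x. complex_of_real (M - r x)))"
    by (rule linfty_state_nonneg[of _ "2 * M"]) (use M in auto)
  moreover have "\<phi> (\<lambda>x. complex_of_real (M - r x)) = M - \<phi> ?r"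
    using linfty_state_diff[OF in_linfty_const r] linfty_state_const by simp
  moreover have "nonneg_cplx (\<phi> (\<lambda>x. complex_of_real (M + r x)))"
    by (rule linfty_state_nonneg[of _ "2 * M"]) (use M in auto)
  moreover have "\<phi> (\<lambda>x. complex_of_real (M + r x)) = M + \<phi> ?r"
    using linfty_state_add[OF in_linfty_const r] linfty_state_const by simp
  ultimately show ?thesis unfolding nonneg_cplx_def by auto
qed

lemma linfty_state_norm_bound:
  assumes "\<And>x. cmod (g x) \<le> M"
  shows "cmod (\<phi> g) \<le> 2 * M"
proof -
  let ?a = "\<lambda>x. complex_of_real (Re (g x))" and ?b = "\<lambda>x. complex_of_real (Im (g x))"
  have a: "\<bar>Re (g x)\<bar> \<le> M" and b: "\<bar>Im (g x)\<bar> \<le> M" for x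
    using assms[of x] abs_Re_le_cmod abs_Im_le_cmod order_trans by blast+
  have la: "in_linfty ?a" by (rule in_linftyI[of _ M]) (use a in auto)
  have lb: "in_linfty ?b" by (rule in_linftyI[of _ M]) (use b in auto)
  have "g = (\<lambda>x. ?a x + \<i> * ?b x)" by (rule ext) (simp add: complex_eq_iff)
  then have "\<phi> g = \<phi> ?a + \<i> * \<phi> ?b"
    using linfty_state_add[OF la in_linfty_cmult[OF lb, of \<i>]] linfty_state_scale[OF lb] by simp
  moreover have "cmod (\<phi> ?a) \<le> M"
    using linfty_state_real_bound[of "\<lambda>x. Re (g x)" M] a by (simp add: cmod_eq_Re)
  moreover have "cmod (\<phi> ?b) \<le> M"
    using linfty_state_real_bound[of "\<lambda>x. Im (g x)" M] b by (simp add: cmod_eq_Re)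
  ultimately show ?thesis
    by (metis mult_2 norm_ii norm_mult norm_triangle_le add_mono mult_1)
qed

lemma linfty_state_mult_diff_bound:
  assumes "in_linfty u" "in_linfty w" "in_linfty g"
    and "\<And>x. cmod (u x - w x) \<le> e" "\<And>x. cmod (g x) \<le> G"
  shows "cmod (\<phi> (\<lambda>x. u x * g x) - \<phi> (\<lambda>x. w x * g x)) \<le> 2 * (e * G)"
proof -
  have "\<phi> (\<lambda>x. u x * g x) - \<phi> (\<lambda>x. w x * g x) = \<phi> (\<lambda>x. (u x - w x) * g x)"
    using linfty_state_diff[of "\<lambda>x. u x * g x" "\<lambda>x. w x * g x"] assms(1-3)
    by (simp add: in_linfty_mult left_diff_distrib)
  also have "cmod \<dots> \<le> 2 * (e * G)"
  proof (rule linfty_state_norm_bound)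
    show "cmod ((u x - w x) * g x) \<le> e * G" for x
      unfolding norm_mult using assms(4,5) norm_ge_zero order_trans by (intro mult_mono) blast+
  qed
  finally show ?thesis .
qed

end

section \<open>Square-summable functions and bounded matrices\<close>

lemma l2norm_sq: "(l2norm v)\<^sup>2 = infsum (\<lambda>x. (cmod (v x))\<^sup>2) UNIV"
proof -
  have "0 \<le> infsum (\<lambda>x. (cmod (v x))\<^sup>2) UNIV" by (rule infsum_nonneg) simp
  then show ?thesis unfolding l2norm_def by simp
qed

lemma l2norm_nonneg: "l2norm v \<ge> 0"
proof -
  have "0 \<le> infsum (\<lambda>x. (cmod (v x))\<^sup>2) UNIV" by (rule infsum_nonneg) simp
  then show ?thesis unfolding l2norm_def by simp
qed

lemma in_l2_zero: "in_l2 (\<lambda>x. 0)" "l2norm (\<lambda>x. 0) = 0"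
  unfolding in_l2_def l2norm_def by auto

lemma in_l2_finite_sum_le: "in_l2 p \<Longrightarrow> finite T \<Longrightarrow> (\<Sum>x\<in>T. (cmod (p x))\<^sup>2) \<le> (l2norm p)\<^sup>2"
  unfolding l2norm_sq in_l2_def by (rule finite_sum_le_infsum) auto

lemma infsum_finite_support:
  fixes u :: "'a \<Rightarrow> 'b::{comm_monoid_add, t2_space}"
  assumes "finite S" "\<And>y. y \<notin> S \<Longrightarrow> u y = 0"
  shows "u summable_on UNIV" "infsum u UNIV = (\<Sum>y\<in>S. u y)"
proof -
  show "u summable_on UNIV"
    using summable_on_cong_neutral[of S UNIV u u] assms by auto
  have "infsum u UNIV = infsum u S"
    by (rule infsum_cong_neutral) (use assms in auto)
  then show "infsum u UNIV = (\<Sum>y\<in>S. u y)" using assms by simp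
qed

lemma infsum_diff:
  fixes f g :: "'b \<Rightarrow> complex"
  assumes "f summable_on A" "g summable_on A"
  shows "infsum (\<lambda>x. f x - g x) A = infsum f A - infsum g A"
proof -
  have "infsum (\<lambda>x. f x + - g x) A = infsum f A + infsum (\<lambda>x. - g x) A"
    using assms by (intro infsum_add) (auto simp: summable_on_uminus)
  then show ?thesis by (simp add: infsum_uminus)
qed

lemma in_l2_finite_support:
  assumes "finite S" "\<And>y. y \<notin> S \<Longrightarrow> u y = 0"
  shows "in_l2 u" "l2norm u = sqrt (\<Sum>y\<in>S. (cmod (u y))\<^sup>2)"
  using infsum_finite_support[of S "\<lambda>y. (cmod (u y))\<^sup>2"] assms
  unfolding in_l2_def l2norm_def by auto

lemma mat_apply_finite_support:
  assumes "finite S" "\<And>y. y \<notin> S \<Longrightarrow> u y = 0"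
  shows "mat_apply a u x = (\<Sum>y\<in>S. a x y * u y)"
  unfolding mat_apply_def using infsum_finite_support(2)[of S "\<lambda>y. a x y * u y"] assms by auto

lemma in_l2_diff:
  assumes "in_l2 p" "in_l2 q"
  shows "in_l2 (\<lambda>x. p x - q x)" "(l2norm (\<lambda>x. p x - q x))\<^sup>2 \<le> 2 * (l2norm p)\<^sup>2 + 2 * (l2norm q)\<^sup>2"
proof -
  have pt: "(cmod (p x - q x))\<^sup>2 \<le> 2 * (cmod (p x))\<^sup>2 + 2 * (cmod (q x))\<^sup>2" for x
  proof -
    have "cmod (p x - q x) \<le> cmod (p x) + cmod (q x)" by (rule norm_triangle_ineq4)
    then have "(cmod (p x - q x))\<^sup>2 \<le> (cmod (p x) + cmod (q x))\<^sup>2"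
      by (simp add: power_mono)
    also have "\<dots> \<le> 2 * (cmod (p x))\<^sup>2 + 2 * (cmod (q x))\<^sup>2"
      by (smt (verit) sum_squares_bound power2_sum)
    finally show ?thesis .
  qed
  have s: "(\<lambda>x. 2 * (cmod (p x))\<^sup>2 + 2 * (cmod (q x))\<^sup>2) summable_on UNIV"
    using assms unfolding in_l2_def
    by (intro summable_on_add summable_on_cmult_right) auto
  show l: "in_l2 (\<lambda>x. p x - q x)"
    unfolding in_l2_def by (rule summable_on_comparison_test[OF s]) (use pt in auto)
  have "(l2norm (\<lambda>x. p x - q x))\<^sup>2 \<le> infsum (\<lambda>x. 2 * (cmod (p x))\<^sup>2 + 2 * (cmod (q x))\<^sup>2) UNIV"
    unfolding l2norm_sq by (rule infsum_mono[OF _ s]) (use l pt in \<open>auto simp: in_l2_def\<close>)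
  also have "\<dots> = 2 * (l2norm p)\<^sup>2 + 2 * (l2norm q)\<^sup>2"
    unfolding l2norm_sq using assms unfolding in_l2_def
    by (subst infsum_add) (auto intro!: summable_on_cmult_right simp: infsum_cmult_right)
  finally show "(l2norm (\<lambda>x. p x - q x))\<^sup>2 \<le> 2 * (l2norm p)\<^sup>2 + 2 * (l2norm q)\<^sup>2" .
qed

lemma in_l2_scale:
  assumes "in_l2 p"
  shows "in_l2 (\<lambda>x. c * p x)" "l2norm (\<lambda>x. c * p x) = cmod c * l2norm p"
proof -
  show "in_l2 (\<lambda>x. c * p x)" unfolding in_l2_def norm_mult power_mult_distrib
    using assms[unfolded in_l2_def] by (rule summable_on_cmult_right)
  show "l2norm (\<lambda>x. c * p x) = cmod c * l2norm p"
    unfolding l2norm_def norm_mult power_mult_distrib by (simp add: infsum_cmult_right' real_sqrt_mult)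
qed

lemma nonneg_summable_on_bounded:
  fixes f :: "'a \<Rightarrow> real"
  assumes "\<And>x. f x \<ge> 0" "\<And>F. finite F \<Longrightarrow> sum f F \<le> B"
  shows "f summable_on UNIV" "infsum f UNIV \<le> B"
proof -
  show s: "f summable_on UNIV"
    by (rule nonneg_bdd_above_summable_on) (use assms in \<open>auto intro!: bdd_aboveI[of _ B]\<close>)
  show "infsum f UNIV \<le> B" by (rule infsum_le_finite_sums[OF s]) (use assms in auto)
qed

definition op_bounded :: "'a mat \<Rightarrow> real \<Rightarrow> bool" where
  "op_bounded a C \<longleftrightarrow> (\<forall>v. in_l2 v \<longrightarrow> l2norm v \<le> 1 \<longrightarrow>
      (\<forall>x. (\<lambda>y. a x y * v y) summable_on UNIV) \<and> in_l2 (mat_apply a v) \<and>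
      l2norm (mat_apply a v) \<le> C)"

text \<open>Unlike \<open>opnorm\<close>, this
  bound can be applied to finite sums of entries without any summability side conditions.\<close>
definition sections_bounded :: "'a mat \<Rightarrow> real \<Rightarrow> bool" where
  "sections_bounded a C \<longleftrightarrow> C \<ge> 0 \<and> (\<forall>S T v. finite S \<longrightarrow> finite T \<longrightarrow>
      (\<Sum>x\<in>T. (cmod (\<Sum>y\<in>S. a x y * v y))\<^sup>2) \<le> C\<^sup>2 * (\<Sum>y\<in>S. (cmod (v y))\<^sup>2))"

lemma bdd_op_op_bounded: "bdd_op a \<Longrightarrow> \<exists>C. op_bounded a C"
proof -
  assume "bdd_op a"
  then obtain C where C: "\<And>v. in_l2 v \<Longrightarrow> (\<forall>x. (\<lambda>y. a x y * v y) summable_on UNIV) \<and>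
     in_l2 (mat_apply a v) \<and> l2norm (mat_apply a v) \<le> C * l2norm v"
    unfolding bdd_op_def by blast
  have "op_bounded a \<bar>C\<bar>"
    unfolding op_bounded_def
  proof (intro allI impI)
    fix v :: "'a \<Rightarrow> complex" assume v: "in_l2 v" "l2norm v \<le> 1"
    have "C * l2norm v \<le> \<bar>C\<bar>"
    proof -
      have "C * l2norm v \<le> \<bar>C\<bar> * l2norm v" by (rule mult_right_mono) (auto simp: l2norm_nonneg)
      also have "\<dots> \<le> \<bar>C\<bar>" by (rule mult_left_le) (use v in auto)
      finally show ?thesis .
    qed
    then show "(\<forall>x. (\<lambda>y. a x y * v y) summable_on UNIV) \<and> in_l2 (mat_apply a v) \<and>
        l2norm (mat_apply a v) \<le> \<bar>C\<bar>"
      using C[OF v(1)] by auto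
  qed
  then show ?thesis by blast
qed

lemma op_bounded_sub:
  assumes "op_bounded a A" "op_bounded b B"
  shows "op_bounded (mat_sub a b) (sqrt (2 * A\<^sup>2 + 2 * B\<^sup>2))"
  unfolding op_bounded_def
proof (intro allI impI)
  fix v :: "'a \<Rightarrow> complex" assume v: "in_l2 v" "l2norm v \<le> 1"
  note a = assms(1)[unfolded op_bounded_def, rule_format, OF v]
  note b = assms(2)[unfolded op_bounded_def, rule_format, OF v]
  have sm: "\<forall>x. (\<lambda>y. mat_sub a b x y * v y) summable_on UNIV"
  proof
    fix x
    have "(\<lambda>y. a x y * v y + - (b x y * v y)) summable_on UNIV"
      using a b by (intro summable_on_add) (auto simp: summable_on_uminus)
    then show "(\<lambda>y. mat_sub a b x y * v y) summable_on UNIV"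
      by (simp add: mat_sub_def algebra_simps)
  qed
  have eq: "mat_apply (mat_sub a b) v = (\<lambda>x. mat_apply a v x - mat_apply b v x)"
  proof
    fix x
    have "infsum (\<lambda>y. a x y * v y + - (b x y * v y)) UNIV = mat_apply a v x + - mat_apply b v x"
      using a b unfolding mat_apply_def
      by (subst infsum_add) (auto simp: summable_on_uminus infsum_uminus)
    then show "mat_apply (mat_sub a b) v x = mat_apply a v x - mat_apply b v x"
      unfolding mat_apply_def mat_sub_def by (simp add: algebra_simps)
  qed
  have l: "in_l2 (mat_apply (mat_sub a b) v)" unfolding eq using in_l2_diff a b by blast
  have "(l2norm (mat_apply (mat_sub a b) v))\<^sup>2 \<le> 2 * A\<^sup>2 + 2 * B\<^sup>2"
  proof -
    have "(l2norm (mat_apply (mat_sub a b) v))\<^sup>2 \<le>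
        2 * (l2norm (mat_apply a v))\<^sup>2 + 2 * (l2norm (mat_apply b v))\<^sup>2"
      unfolding eq using in_l2_diff a b by blast
    moreover have "(l2norm (mat_apply a v))\<^sup>2 \<le> A\<^sup>2" using a l2norm_nonneg by (metis power_mono)
    moreover have "(l2norm (mat_apply b v))\<^sup>2 \<le> B\<^sup>2" using b l2norm_nonneg by (metis power_mono)
    ultimately show ?thesis by linarith
  qed
  then have "l2norm (mat_apply (mat_sub a b) v) \<le> sqrt (2 * A\<^sup>2 + 2 * B\<^sup>2)"
    using l2norm_nonneg real_le_rsqrt by blast
  then show "(\<forall>x. (\<lambda>y. mat_sub a b x y * v y) summable_on UNIV) \<and> in_l2 (mat_apply (mat_sub a b) v) \<and>
       l2norm (mat_apply (mat_sub a b) v) \<le> sqrt (2 * A\<^sup>2 + 2 * B\<^sup>2)" using sm l by blast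
qed

lemma op_bounded_scale:
  assumes "op_bounded a A"
  shows "op_bounded (mat_scale c a) (cmod c * A)"
  unfolding op_bounded_def
proof (intro allI impI)
  fix v :: "'a \<Rightarrow> complex" assume v: "in_l2 v" "l2norm v \<le> 1"
  note a = assms(1)[unfolded op_bounded_def, rule_format, OF v]
  have sm: "\<forall>x. (\<lambda>y. mat_scale c a x y * v y) summable_on UNIV"
    using a unfolding mat_scale_def by (auto simp: mult.assoc intro: summable_on_cmult_right)
  have eq: "mat_apply (mat_scale c a) v = (\<lambda>x. c * mat_apply a v x)"
    unfolding mat_apply_def mat_scale_def by (auto simp: mult.assoc infsum_cmult_right')
  show "(\<forall>x. (\<lambda>y. mat_scale c a x y * v y) summable_on UNIV) \<and> in_l2 (mat_apply (mat_scale c a) v) \<and>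
       l2norm (mat_apply (mat_scale c a) v) \<le> cmod c * A"
    using sm a in_l2_scale[of "mat_apply a v" c] unfolding eq by (auto intro: mult_left_mono)
qed

lemma op_bounded_zero: "op_bounded (\<lambda>x y. 0) 0"
proof -
  have "mat_apply (\<lambda>x y. 0) v = (\<lambda>x. 0)" for v :: "'a \<Rightarrow> complex"
    unfolding mat_apply_def by simp
  then show ?thesis unfolding op_bounded_def by (simp add: in_l2_zero)
qed

lemma op_bounded_bdd_above:
  assumes "op_bounded a C"
  shows "bdd_above {l2norm (mat_apply a v) | v. in_l2 v \<and> l2norm v \<le> 1}"
  using assms unfolding op_bounded_def by (auto intro!: bdd_aboveI[of _ C])

lemma op_bounded_apply_le_opnorm:
  assumes "op_bounded a C" "in_l2 v" "l2norm v \<le> 1"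
  shows "l2norm (mat_apply a v) \<le> opnorm a"
  unfolding opnorm_def by (rule cSup_upper[OF _ op_bounded_bdd_above[OF assms(1)]]) (use assms in auto)

lemma opnorm_le_op_bounded:
  assumes "op_bounded a C"
  shows "opnorm a \<le> C"
  unfolding opnorm_def
proof (rule cSup_least)
  show "{l2norm (mat_apply a v) |v. in_l2 v \<and> l2norm v \<le> 1} \<noteq> {}"
  proof -
    have "l2norm (mat_apply a (\<lambda>x. 0)) \<in> {l2norm (mat_apply a v) |v. in_l2 v \<and> l2norm v \<le> 1}"
      using in_l2_zero by (smt (verit, best) mem_Collect_eq)
    then show ?thesis by blast
  qed
qed (use assms in \<open>auto simp: op_bounded_def\<close>)

text \<open>Normalize \<open>v\<close> on \<open>S\<close> to a unit vector \<open>u\<close>; the section of \<open>a u\<close> over \<open>T\<close> is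
  then bounded by \<open>l2norm (a u) \<le> opnorm a\<close>.\<close>
lemma op_bounded_sections_opnorm:
  assumes "op_bounded a C"
  shows "sections_bounded a (opnorm a)"
  unfolding sections_bounded_def
proof (intro conjI allI impI)
  show "0 \<le> opnorm a"
    using op_bounded_apply_le_opnorm[OF assms in_l2_zero(1)] in_l2_zero(2) l2norm_nonneg
    by (metis order_trans zero_le_one)
  fix S T :: "'a set" and v :: "'a \<Rightarrow> complex" assume S: "finite S" and T: "finite T"
  define n2 where "n2 = (\<Sum>y\<in>S. (cmod (v y))\<^sup>2)"
  show "(\<Sum>x\<in>T. (cmod (\<Sum>y\<in>S. a x y * v y))\<^sup>2) \<le> (opnorm a)\<^sup>2 * n2"
  proof (cases "n2 = 0")
    case True
    then have "\<forall>y\<in>S. v y = 0" unfolding n2_def using S by (simp add: sum_nonneg_eq_0_iff)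
    then show ?thesis by (simp add: True)
  next
    case False
    have n2p: "n2 > 0"
      using False unfolding n2_def by (metis sum_nonneg zero_le_power2 less_eq_real_def)
    define n where "n = sqrt n2"
    have np: "n > 0" using n2p unfolding n_def by simp
    define u where "u = (\<lambda>y. if y \<in> S then v y / n else 0)"
    have u0: "\<And>y. y \<notin> S \<Longrightarrow> u y = 0" unfolding u_def by simp
    have ul: "in_l2 u" using in_l2_finite_support[of S u, OF S u0] by blast
    have "l2norm u = sqrt (\<Sum>y\<in>S. (cmod (u y))\<^sup>2)" using in_l2_finite_support[of S u, OF S u0] by blast
    also have "(\<Sum>y\<in>S. (cmod (u y))\<^sup>2) = (\<Sum>y\<in>S. (cmod (v y))\<^sup>2 / n2)"
      unfolding u_def n_def using n2p by (intro sum.cong) (auto simp: norm_divide power_divide)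
    also have "\<dots> = 1" using n2p by (simp add: n2_def flip: sum_divide_distrib)
    finally have un: "l2norm u \<le> 1" by simp
    have ma: "mat_apply a u x = (\<Sum>y\<in>S. a x y * v y) / n" for x
      using mat_apply_finite_support[of S u a x, OF S u0] unfolding u_def
      by (simp add: sum_divide_distrib)
    have bu: "in_l2 (mat_apply a u)" using assms ul un unfolding op_bounded_def by blast
    have "(\<Sum>x\<in>T. (cmod (mat_apply a u x))\<^sup>2) \<le> (l2norm (mat_apply a u))\<^sup>2"
      by (rule in_l2_finite_sum_le[OF bu T])
    also have "\<dots> \<le> (opnorm a)\<^sup>2"
      using op_bounded_apply_le_opnorm[OF assms ul un] l2norm_nonneg by (metis power_mono)
    finally have "(\<Sum>x\<in>T. (cmod (\<Sum>y\<in>S. a x y * v y))\<^sup>2 / n2) \<le> (opnorm a)\<^sup>2"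
      unfolding ma n_def using n2p by (simp add: norm_divide power_divide)
    then show ?thesis using n2p by (simp add: pos_divide_le_eq flip: sum_divide_distrib)
  qed
qed

lemma sections_bounded_mono: "sections_bounded a C \<Longrightarrow> C \<le> D \<Longrightarrow> sections_bounded a D"
  unfolding sections_bounded_def
  by (smt (verit, ccfv_SIG) mult_right_mono power_mono sum_nonneg zero_le_power2)

lemma sections_bounded_nonneg: "sections_bounded a C \<Longrightarrow> C \<ge> 0" unfolding sections_bounded_def by blast

lemma sections_boundedD: "sections_bounded a C \<Longrightarrow> finite S \<Longrightarrow> finite T \<Longrightarrow>
   (\<Sum>x\<in>T. (cmod (\<Sum>y\<in>S. a x y * v y))\<^sup>2) \<le> C\<^sup>2 * (\<Sum>y\<in>S. (cmod (v y))\<^sup>2)"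
  unfolding sections_bounded_def by blast

lemma sections_bounded_column: "sections_bounded a C \<Longrightarrow> finite T \<Longrightarrow> (\<Sum>x\<in>T. (cmod (a x y))\<^sup>2) \<le> C\<^sup>2"
  using sections_boundedD[of a C "{y}" T "\<lambda>_. 1"] by simp

lemma sections_bounded_entry: "sections_bounded a C \<Longrightarrow> cmod (a x y) \<le> C"
proof -
  assume f: "sections_bounded a C"
  have "(cmod (a x y))\<^sup>2 \<le> C\<^sup>2" using sections_bounded_column[OF f, of "{x}" y] by simp
  then show ?thesis using sections_bounded_nonneg[OF f] by (rule power2_le_imp_le)
qed

text \<open>Test the section on the vector \<open>cnj (a x y)\<close>, \<open>y \<in> S\<close>: its value at \<open>x\<close> is the
  squared norm of the row.\<close>
lemma sections_bounded_row: "sections_bounded a C \<Longrightarrow> finite S \<Longrightarrow> (\<Sum>y\<in>S. (cmod (a x y))\<^sup>2) \<le> C\<^sup>2"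
proof -
  assume f: "sections_bounded a C" and S: "finite S"
  define P where "P = (\<Sum>y\<in>S. (cmod (a x y))\<^sup>2)"
  have P0: "P \<ge> 0" unfolding P_def by (simp add: sum_nonneg)
  have e: "(\<Sum>y\<in>S. a x y * cnj (a x y)) = complex_of_real P"
    by (simp add: P_def complex_norm_square flip: of_real_power)
  have "(\<Sum>x'\<in>{x}. (cmod (\<Sum>y\<in>S. a x' y * cnj (a x y)))\<^sup>2) \<le> C\<^sup>2 * (\<Sum>y\<in>S. (cmod (cnj (a x y)))\<^sup>2)"
    by (rule sections_boundedD[OF f S]) simp
  then have "(cmod (\<Sum>y\<in>S. a x y * cnj (a x y)))\<^sup>2 \<le> C\<^sup>2 * P"
    unfolding P_def by simp
  then have "P * P \<le> C\<^sup>2 * P" unfolding e using P0 by (simp add: power2_eq_square)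
  then have "P \<le> C\<^sup>2"
  proof (cases "P = 0")
    case False
    then have "P > 0" using P0 by simp
    then show ?thesis using \<open>P * P \<le> C\<^sup>2 * P\<close> by (meson mult_right_le_imp_le)
  qed simp
  then show ?thesis unfolding P_def .
qed

lemma sections_bounded_column_infsum:
  "sections_bounded a C \<Longrightarrow>
    (\<lambda>x. (cmod (a x y))\<^sup>2) summable_on UNIV \<and> infsum (\<lambda>x. (cmod (a x y))\<^sup>2) UNIV \<le> C\<^sup>2"
  using nonneg_summable_on_bounded[of "\<lambda>x. (cmod (a x y))\<^sup>2" "C\<^sup>2"] sections_bounded_column[of a C]
  by auto

lemma sections_bounded_product:
  assumes a: "sections_bounded a A" and b: "sections_bounded b B"
  shows "(\<lambda>y. a x y * b y z) summable_on UNIV" "cmod (infsum (\<lambda>y. a x y * b y z) UNIV) \<le> A * B"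
proof -
  have fin: "(\<Sum>y\<in>F. cmod (a x y * b y z)) \<le> A * B" if F: "finite F" for F
  proof -
    have "(\<Sum>y\<in>F. cmod (a x y * b y z)) = (\<Sum>y\<in>F. \<bar>cmod (a x y)\<bar> * \<bar>cmod (b y z)\<bar>)"
      by (simp add: norm_mult)
    also have "\<dots> \<le> L2_set (\<lambda>y. cmod (a x y)) F * L2_set (\<lambda>y. cmod (b y z)) F"
      by (rule L2_set_mult_ineq)
    also have "\<dots> \<le> A * B"
    proof (rule mult_mono)
      show "L2_set (\<lambda>y. cmod (a x y)) F \<le> A"
        unfolding L2_set_def using sections_bounded_row[OF a F, of x] sections_bounded_nonneg[OF a]
        by (simp add: real_le_lsqrt)
      show "L2_set (\<lambda>y. cmod (b y z)) F \<le> B"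
        unfolding L2_set_def using sections_bounded_column[OF b F, of z] sections_bounded_nonneg[OF b]
        by (simp add: real_le_lsqrt)
    qed (auto simp: sections_bounded_nonneg[OF b] sections_bounded_nonneg[OF a])
    finally show ?thesis .
  qed
  have abs: "(\<lambda>y. cmod (a x y * b y z)) summable_on UNIV"
    "infsum (\<lambda>y. cmod (a x y * b y z)) UNIV \<le> A * B"
    using nonneg_summable_on_bounded[of "\<lambda>y. cmod (a x y * b y z)" "A * B"] fin by auto
  show "(\<lambda>y. a x y * b y z) summable_on UNIV" using abs(1) by (rule abs_summable_summable)
  show "cmod (infsum (\<lambda>y. a x y * b y z) UNIV) \<le> A * B"
    using norm_infsum_bound[OF abs(1)] abs(2) by linarith
qed

lemma opnorm_nonneg: "op_bounded a C \<Longrightarrow> 0 \<le> opnorm a"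
  using op_bounded_sections_opnorm sections_bounded_nonneg by blast

lemma op_bounded_entry_le_opnorm: "op_bounded c C \<Longrightarrow> cmod (c x y) \<le> opnorm c"
  by (rule sections_bounded_entry[OF op_bounded_sections_opnorm])

lemma in_roe_op_bounded: "in_roe a \<Longrightarrow> \<exists>C. op_bounded a C"
proof -
  assume "in_roe a"
  then have "bdd_op a" unfolding in_roe_def by blast
  then show ?thesis by (rule bdd_op_op_bounded)
qed

lemma in_roe_sections_bounded: "in_roe a \<Longrightarrow> \<exists>C. sections_bounded a C"
  unfolding in_roe_def using bdd_op_op_bounded op_bounded_sections_opnorm by blast

lemma in_roe_approx_finite_prop:
  assumes "in_roe a" "\<epsilon> > 0"
  shows "\<exists>b. bdd_op b \<and> finite_prop b \<and> sections_bounded (mat_sub a b) \<epsilon>"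
proof -
  obtain b where b: "bdd_op b" "finite_prop b" "opnorm (mat_sub a b) < \<epsilon>"
    using assms unfolding in_roe_def by blast
  obtain A where A: "op_bounded a A" using assms bdd_op_op_bounded unfolding in_roe_def by blast
  obtain B where B: "op_bounded b B" using b bdd_op_op_bounded by blast
  have "sections_bounded (mat_sub a b) (opnorm (mat_sub a b))"
    by (rule op_bounded_sections_opnorm[OF op_bounded_sub[OF A B]])
  then have "sections_bounded (mat_sub a b) \<epsilon>" using sections_bounded_mono less_imp_le[OF b(3)] by blast
  then show ?thesis using b by blast
qed

lemma in_roe_finite_prop:
  assumes "bdd_op a" "finite_prop a"
  shows "in_roe a"
proof -
  have "mat_sub a a = (\<lambda>x y. 0)" unfolding mat_sub_def by simp
  then have "opnorm (mat_sub a a) \<le> 0" using opnorm_le_op_bounded[OF op_bounded_zero] by simp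
  then have "opnorm (mat_sub a a) < \<epsilon>" if "\<epsilon> > 0" for \<epsilon> :: real
    using that by linarith
  then show ?thesis unfolding in_roe_def using assms by blast
qed

lemma in_linfty_cond_exp: "in_roe a \<Longrightarrow> in_linfty (cond_exp a)"
proof -
  assume ra: "in_roe a"
  obtain C where "sections_bounded a C" using in_roe_sections_bounded[OF ra] by blast
  then show ?thesis unfolding cond_exp_def by (intro in_linftyI[of _ C]) (rule sections_bounded_entry)
qed

lemma cond_exp_mult_sub_left:
  assumes "sections_bounded a A" "sections_bounded a' A'" "sections_bounded c C"
  shows "cond_exp (mat_mult a c) x - cond_exp (mat_mult a' c) x =
    cond_exp (mat_mult (mat_sub a a') c) x"
  unfolding cond_exp_def mat_mult_def mat_sub_def
  using infsum_diff[OF sections_bounded_product(1)[OF assms(1,3)]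
      sections_bounded_product(1)[OF assms(2,3)]]
  by (simp add: algebra_simps)

lemma cond_exp_mult_sub_right:
  assumes "sections_bounded a A" "sections_bounded a' A'" "sections_bounded b B"
  shows "cond_exp (mat_mult b a) y - cond_exp (mat_mult b a') y =
    cond_exp (mat_mult b (mat_sub a a')) y"
  unfolding cond_exp_def mat_mult_def mat_sub_def
  using infsum_diff[OF sections_bounded_product(1)[OF assms(3,1)]
      sections_bounded_product(1)[OF assms(3,2)]]
  by (simp add: algebra_simps)

lemma cond_exp_mult_bound:
  "sections_bounded a A \<Longrightarrow> sections_bounded c C \<Longrightarrow> cmod (cond_exp (mat_mult a c) x) \<le> A * C"
  unfolding cond_exp_def mat_mult_def by (rule sections_bounded_product(2))

lemma in_linfty_cond_exp_mult:
  "sections_bounded a A \<Longrightarrow> sections_bounded c C \<Longrightarrow> in_linfty (cond_exp (mat_mult a c))"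
  by (rule in_linftyI[of _ "A * C"]) (rule cond_exp_mult_bound)

section \<open>Coarse geometry and partial translations\<close>

lemma coarse_fun_bounded:
  assumes "coarse_fun h"
  obtains s where "0 \<le> s" "\<And>x y. dist x y \<le> R \<Longrightarrow> \<bar>h x - h y\<bar> \<le> s"
proof -
  have R: "\<bar>R\<bar> + 1 > 0" by simp
  then obtain s where s: "\<And>x y. dist x y < \<bar>R\<bar> + 1 \<Longrightarrow> \<bar>h x - h y\<bar> < s"
    using assms unfolding coarse_fun_def by blast
  have "0 \<le> s" using s[of undefined undefined] R by simp
  moreover have "\<bar>h x - h y\<bar> \<le> s" if "dist x y \<le> R" for x y
    using s[of x y] that by linarith
  ultimately show ?thesis using that by blast
qed

lemma coarse_fun_exp_bounded:
  assumes "coarse_fun h"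
  obtains G where "\<And>x y. dist x y \<le> R \<Longrightarrow> exp (\<beta> * (h x - h y)) \<le> G"
proof -
  obtain s where s: "\<And>x y. dist x y \<le> R \<Longrightarrow> \<bar>h x - h y\<bar> \<le> s"
    using coarse_fun_bounded[OF assms] by blast
  have "exp (\<beta> * (h x - h y)) \<le> exp (\<bar>\<beta>\<bar> * s)" if "dist x y \<le> R" for x y
  proof -
    have "\<beta> * (h x - h y) \<le> \<bar>\<beta>\<bar> * \<bar>h x - h y\<bar>" by (metis abs_ge_self abs_mult)
    also have "\<dots> \<le> \<bar>\<beta>\<bar> * s" using s[OF that] by (intro mult_left_mono) auto
    finally show ?thesis by simp
  qed
  then show ?thesis using that by blast
qed

lemma ulf_labelling:
  assumes "ulf TYPE('a)"
  obtains N :: nat and idx :: "'a::metric_space \<Rightarrow> 'a \<Rightarrow> nat"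
  where "\<And>x::'a. finite (cball x R)" "\<And>x::'a. card (cball x R) \<le> N"
    "\<And>x. inj_on (idx x) (cball x R)" "\<And>x y. y \<in> cball x R \<Longrightarrow> idx x y < N"
proof -
  have "\<bar>R\<bar> + 1 > 0" by simp
  then obtain N :: nat where N: "\<And>x::'a. finite (ball x (\<bar>R\<bar> + 1)) \<and> card (ball x (\<bar>R\<bar> + 1)) \<le> N"
    using assms unfolding ulf_def by blast
  have sub: "cball x R \<subseteq> ball x (\<bar>R\<bar> + 1)" for x :: 'a
    by (rule subsetI) (simp add: mem_cball mem_ball)
  have fin: "finite (cball x R)" for x :: 'a
    using finite_subset[OF sub[of x]] N[of x] by simp
  have card: "card (cball x R) \<le> N" for x :: 'a
    using N[of x] card_mono[OF _ sub[of x]] by linarith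
  define idx where "idx x = (SOME e. bij_betw e (cball x R) {0..<card (cball x R)})" for x :: 'a
  have bij: "bij_betw (idx x) (cball x R) {0..<card (cball x R)}" for x
    unfolding idx_def by (rule someI_ex[OF ex_bij_betw_finite_nat[OF fin]])
  have "idx x y < N" if "y \<in> cball x R" for x y
  proof -
    have "idx x y \<in> {0..<card (cball x R)}" using bij[of x] that by (rule bij_betw_apply)
    then show ?thesis using card[of x] by simp
  qed
  moreover have "inj_on (idx x) (cball x R)" for x using bij[of x] by (rule bij_betw_imp_inj_on)
  ultimately show ?thesis using that fin card by blast
qed

lemma in_linfty_cball_sum:
  fixes g :: "'a::metric_space \<Rightarrow> 'a \<Rightarrow> complex"
  assumes "\<And>x::'a. finite (cball x R)" "\<And>x::'a. card (cball x R) \<le> N"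
    and "\<And>x y. y \<in> cball x R \<Longrightarrow> cmod (g x y) \<le> B"
  shows "in_linfty (\<lambda>x. \<Sum>y\<in>cball x R. g x y)"
proof (rule in_linftyI)
  fix x
  have "cmod (\<Sum>y\<in>cball x R. g x y) \<le> (\<Sum>y\<in>cball x R. cmod (g x y))" by (rule norm_sum)
  also have "\<dots> \<le> of_nat (card (cball x R)) * max B 0"
    by (rule sum_bounded_above) (use assms(3) in \<open>auto simp: le_max_iff_disj\<close>)
  also have "\<dots> \<le> of_nat N * max B 0" using assms(2) by (intro mult_right_mono) auto
  finally show "cmod (\<Sum>y\<in>cball x R. g x y) \<le> of_nat N * max B 0" .
qed

lemma partial_translation_subset: "partial_translation f A \<Longrightarrow> B \<subseteq> A \<Longrightarrow> partial_translation f B"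
  unfolding partial_translation_def by (meson inj_on_subset subsetD)

lemma partial_translation_inv:
  assumes "partial_translation f A"
  shows "partial_translation (inv_into A f) (f ` A)"
proof -
  obtain R where R: "\<And>x. x \<in> A \<Longrightarrow> dist x (f x) \<le> R" using assms unfolding partial_translation_def by blast
  have "dist y (inv_into A f y) \<le> R" if "y \<in> f ` A" for y
    using R[of "inv_into A f y"] that by (simp add: inv_into_into f_inv_into_f dist_commute)
  moreover have "inj_on (inv_into A f) (f ` A)" by (rule inj_on_inv_into) simp
  ultimately show ?thesis unfolding partial_translation_def by blast
qed

text \<open>Given injective labellings of the balls, a pair \<open>(x, y)\<close> with \<open>y\<close> carrying label \<open>i\<close> in the
  ball around \<open>x\<close> and \<open>x\<close> carrying label \<open>j\<close> in the ball around \<open>y\<close> is determined by either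
  of its coordinates, so these pairs form the graph of a partial translation.\<close>
lemma label_pairs_partial_translation:
  assumes inj: "\<And>x. inj_on (idx x) (cball x R)"
  obtains f A where "partial_translation f A" "\<And>x. x \<in> A \<Longrightarrow> dist x (f x) \<le> R"
    "\<And>x y. y \<in> cball x R \<Longrightarrow> idx x y = i \<and> idx y x = j \<longleftrightarrow> x \<in> A \<and> y = f x"
proof -
  define A where "A = {x. \<exists>y\<in>cball x R. idx x y = i \<and> idx y x = j}"
  define f where "f x = inv_into (cball x R) (idx x) i" for x
  have fA: "f x \<in> cball x R \<and> idx x (f x) = i \<and> idx (f x) x = j" if x: "x \<in> A" for x
  proof -
    obtain y where y: "y \<in> cball x R" "idx x y = i" "idx y x = j" using x unfolding A_def by blast
    have "f x = y" unfolding f_def using inv_into_f_f[OF inj y(1)] y(2) by simp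
    then show ?thesis using y by simp
  qed
  have pairs: "idx x y = i \<and> idx y x = j \<longleftrightarrow> x \<in> A \<and> y = f x" if "y \<in> cball x R" for x y
  proof
    assume a: "idx x y = i \<and> idx y x = j"
    then have "x \<in> A" unfolding A_def using that by blast
    moreover have "f x = y" unfolding f_def using inv_into_f_f[OF inj that] a by simp
    ultimately show "x \<in> A \<and> y = f x" by simp
  qed (use fA in auto)
  have "inj_on f A"
  proof (rule inj_onI)
    fix x1 x2 assume x: "x1 \<in> A" "x2 \<in> A" "f x1 = f x2"
    have "x1 \<in> cball (f x1) R" "x2 \<in> cball (f x1) R"
      using fA[OF x(1)] fA[OF x(2)] x(3) by (simp_all add: dist_commute)
    moreover have "idx (f x1) x1 = idx (f x1) x2" using fA[OF x(1)] fA[OF x(2)] x(3) by simp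
    ultimately show "x1 = x2" using inj[of "f x1"] by (meson inj_onD)
  qed
  moreover have dist: "dist x (f x) \<le> R" if "x \<in> A" for x using fA[OF that] by simp
  ultimately have "partial_translation f A" unfolding partial_translation_def by blast
  then show ?thesis using that dist pairs by blast
qed

lemma norm_g_fun_le:
  assumes "\<And>x. x \<in> A \<Longrightarrow> exp (\<beta> * (h x - h (f x))) \<le> G"
  shows "cmod (g_fun h \<beta> f A x) \<le> max G 0"
  using assms[of x] by (auto simp: g_fun_def le_max_iff_disj)

text \<open>Matrix of the weighted partial isometry \<open>\<delta>_x \<mapsto> c x \<delta>_(f x)\<close> (\<open>x \<in> A\<close>).\<close>
definition graph_mat :: "('a \<Rightarrow> 'a) \<Rightarrow> 'a set \<Rightarrow> ('a \<Rightarrow> complex) \<Rightarrow> 'a mat" where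
  "graph_mat f A c = (\<lambda>y x. if x \<in> A \<and> y = f x then c x else 0)"

lemma graph_mat_sub: "mat_sub (graph_mat f A c) (graph_mat f A d) = graph_mat f A (\<lambda>x. c x - d x)"
  unfolding mat_sub_def graph_mat_def by (intro ext) auto

lemma graph_mat_scale: "mat_scale w (graph_mat f A c) = graph_mat f A (\<lambda>x. w * c x)"
  unfolding mat_scale_def graph_mat_def by (intro ext) auto

lemma graph_mat_apply:
  assumes "inj_on f A"
  shows "(\<lambda>x. graph_mat f A c y x * v x) summable_on UNIV"
    and "mat_apply (graph_mat f A c) v y =
           (if y \<in> f ` A then c (inv_into A f y) * v (inv_into A f y) else 0)"
proof -
  have zero: "graph_mat f A c y x * v x = 0" if "x \<notin> {inv_into A f y}" for x
    using that assms by (auto simp: graph_mat_def)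
  show "(\<lambda>x. graph_mat f A c y x * v x) summable_on UNIV"
    by (rule infsum_finite_support(1)[of "{inv_into A f y}"]) (use zero in auto)
  have "mat_apply (graph_mat f A c) v y = graph_mat f A c y (inv_into A f y) * v (inv_into A f y)"
    unfolding mat_apply_def by (subst infsum_finite_support(2)[of "{inv_into A f y}"]) (use zero in auto)
  then show "mat_apply (graph_mat f A c) v y =
      (if y \<in> f ` A then c (inv_into A f y) * v (inv_into A f y) else 0)"
    by (auto simp: graph_mat_def inv_into_into f_inv_into_f)
qed

lemma graph_mat_l2:
  assumes inj: "inj_on f A" and c: "\<And>x. x \<in> A \<Longrightarrow> cmod (c x) \<le> B" and B: "0 \<le> B"
    and v: "in_l2 v"
  shows "in_l2 (mat_apply (graph_mat f A c) v)"
    and "l2norm (mat_apply (graph_mat f A c) v) \<le> B * l2norm v"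
proof -
  define P where "P y = (cmod (mat_apply (graph_mat f A c) v y))\<^sup>2" for y
  define q where "q x = (cmod (c x * v x))\<^sup>2" for x
  have P_outside: "P y = 0" if "y \<notin> f ` A" for y
    using that unfolding P_def graph_mat_apply(2)[OF inj] by simp
  have P_f: "(P \<circ> f) x = q x" if "x \<in> A" for x
    using that inj unfolding P_def q_def graph_mat_apply(2)[OF inj] by simp
  have vs: "(\<lambda>x. (cmod (v x))\<^sup>2) summable_on A"
    using v unfolding in_l2_def by (rule summable_on_subset) simp
  have vsB: "(\<lambda>x. B\<^sup>2 * (cmod (v x))\<^sup>2) summable_on A" using vs by (rule summable_on_cmult_right)
  have qb: "q x \<le> B\<^sup>2 * (cmod (v x))\<^sup>2" if "x \<in> A" for x
  proof -
    have "cmod (c x * v x) \<le> B * cmod (v x)"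
      unfolding norm_mult using c[OF that] by (intro mult_right_mono) auto
    then show ?thesis unfolding q_def by (metis norm_ge_zero power_mono power_mult_distrib)
  qed
  have qs: "q summable_on A"
    by (rule summable_on_comparison_test[OF vsB]) (use qb in \<open>auto simp: q_def\<close>)
  have "(P \<circ> f) summable_on A" using summable_on_cong[of A "P \<circ> f" q] P_f qs by blast
  then have "P summable_on (f ` A)" using summable_on_reindex[OF inj] by blast
  then have "P summable_on UNIV"
    using summable_on_cong_neutral[of UNIV "f ` A" P P] P_outside by blast
  then show "in_l2 (mat_apply (graph_mat f A c) v)" unfolding in_l2_def P_def .
  have "infsum P UNIV = infsum P (f ` A)" by (rule infsum_cong_neutral) (use P_outside in auto)
  also have "\<dots> = infsum (P \<circ> f) A" by (rule infsum_reindex[OF inj])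
  also have "\<dots> = infsum q A" by (rule infsum_cong) (rule P_f)
  also have "\<dots> \<le> infsum (\<lambda>x. B\<^sup>2 * (cmod (v x))\<^sup>2) A" by (rule infsum_mono[OF qs vsB qb])
  also have "\<dots> = B\<^sup>2 * infsum (\<lambda>x. (cmod (v x))\<^sup>2) A" by (rule infsum_cmult_right')
  also have "\<dots> \<le> B\<^sup>2 * infsum (\<lambda>x. (cmod (v x))\<^sup>2) UNIV"
    by (intro mult_left_mono infsum_mono_neutral) (use vs v in \<open>auto simp: in_l2_def\<close>)
  also have "\<dots> = (B * l2norm v)\<^sup>2" by (simp add: l2norm_sq power_mult_distrib)
  finally have "(l2norm (mat_apply (graph_mat f A c) v))\<^sup>2 \<le> (B * l2norm v)\<^sup>2"
    unfolding l2norm_sq P_def .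
  then show "l2norm (mat_apply (graph_mat f A c) v) \<le> B * l2norm v"
    using B l2norm_nonneg by (meson mult_nonneg_nonneg power2_le_imp_le)
qed

lemma op_bounded_graph_mat:
  assumes "inj_on f A" "\<And>x. x \<in> A \<Longrightarrow> cmod (c x) \<le> B" "0 \<le> B"
  shows "op_bounded (graph_mat f A c) B"
  unfolding op_bounded_def
proof (intro allI impI conjI)
  fix v :: "'a \<Rightarrow> complex" assume v: "in_l2 v" "l2norm v \<le> 1"
  show "(\<lambda>y. graph_mat f A c x y * v y) summable_on UNIV" for x
    by (rule graph_mat_apply(1)[OF assms(1)])
  show "in_l2 (mat_apply (graph_mat f A c) v)" by (rule graph_mat_l2(1)[OF assms v(1)])
  have "l2norm (mat_apply (graph_mat f A c) v) \<le> B * l2norm v" by (rule graph_mat_l2(2)[OF assms v(1)])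
  also have "\<dots> \<le> B" using v(2) assms(3) by (simp add: mult_left_le)
  finally show "l2norm (mat_apply (graph_mat f A c) v) \<le> B" .
qed

lemma in_roe_graph_mat:
  assumes f: "partial_translation f A" and c: "\<And>x. x \<in> A \<Longrightarrow> cmod (c x) \<le> B"
  shows "in_roe (graph_mat f A c)"
proof (rule in_roe_finite_prop)
  have inj: "inj_on f A" using f unfolding partial_translation_def by blast
  have c': "\<And>x. x \<in> A \<Longrightarrow> cmod (c x) \<le> max B 0" using c by (meson max.coboundedI1)
  show "bdd_op (graph_mat f A c)"
    unfolding bdd_op_def
    using graph_mat_apply(1)[OF inj] graph_mat_l2[of f A c "max B 0", OF inj c' max.cobounded2] by blast
  obtain R where R: "\<And>x. x \<in> A \<Longrightarrow> dist x (f x) \<le> R"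
    using f unfolding partial_translation_def by blast
  show "finite_prop (graph_mat f A c)"
    unfolding finite_prop_def graph_mat_def by (rule exI[of _ R]) (use R in \<open>auto simp: dist_commute\<close>)
qed

lemma cond_exp_graph_mat_inv_mult:
  assumes "inj_on f A"
  shows "cond_exp (mat_mult (graph_mat (inv_into A f) (f ` A) (\<lambda>_. 1)) (graph_mat f A c)) x =
    (if x \<in> A then c x else 0)"
proof -
  let ?a = "graph_mat (inv_into A f) (f ` A) (\<lambda>_. 1)" and ?b = "graph_mat f A c"
  have "cond_exp (mat_mult ?a ?b) x = (\<Sum>y\<in>{f x}. ?a x y * ?b y x)"
    unfolding cond_exp_def mat_mult_def
    by (rule infsum_finite_support(2)) (auto simp: graph_mat_def)
  then show ?thesis using assms by (simp add: graph_mat_def)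
qed

lemma cond_exp_mult_graph_mat_inv:
  assumes "inj_on f A"
  shows "cond_exp (mat_mult (graph_mat f A c) (graph_mat (inv_into A f) (f ` A) (\<lambda>_. 1))) y =
    (if y \<in> f ` A then c (inv_into A f y) else 0)"
proof -
  let ?a = "graph_mat (inv_into A f) (f ` A) (\<lambda>_. 1)" and ?b = "graph_mat f A c"
  have "cond_exp (mat_mult ?b ?a) y = (\<Sum>x\<in>{inv_into A f y}. ?b y x * ?a x y)"
    unfolding cond_exp_def mat_mult_def
    by (rule infsum_finite_support(2)) (use assms in \<open>auto simp: graph_mat_def\<close>)
  then show ?thesis using assms by (auto simp: graph_mat_def inv_into_into f_inv_into_f)
qed

section \<open>Entire extensions of the dynamics\<close>

lemma zero_islimpt_Reals: "(0::complex) islimpt \<real>"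
  unfolding islimpt_approachable
proof (intro allI impI)
  fix e :: real assume "0 < e"
  show "\<exists>x'\<in>\<real>. x' \<noteq> 0 \<and> dist x' (0::complex) < e"
  proof (rule bexI[where x = "complex_of_real (e / 2)"])
    show "complex_of_real (e / 2) \<noteq> 0 \<and> dist (complex_of_real (e / 2)) 0 < e"
      using \<open>0 < e\<close> by (simp add: dist_0_norm)
  qed simp
qed

lemma sigma_entry:
  "sigma h t b y x = exp (\<i> * complex_of_real t * complex_of_real (h y - h x)) * b y x"
proof -
  have "\<i> * complex_of_real (t * h y) + - \<i> * complex_of_real (t * h x) =
      \<i> * complex_of_real t * complex_of_real (h y - h x)"
    by (simp add: algebra_simps)
  then show ?thesis unfolding sigma_def by (simp add: mult_exp_exp mult_ac)
qed

lemma entire_ext_entry_differentiable: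
  assumes F: "entire_ext h b F"
  shows "(\<lambda>w. F w y x) field_differentiable (at w0)"
proof -
  obtain D where D: "in_roe D"
    "((\<lambda>w. opnorm (mat_sub (mat_sub (F w) (F w0)) (mat_scale (w - w0) D)) / cmod (w - w0)) \<longlongrightarrow> 0) (at w0)"
    using F unfolding entire_ext_def by blast
  have bound: "cmod ((F w y x - F w0 y x) / (w - w0) - D y x) \<le>
      opnorm (mat_sub (mat_sub (F w) (F w0)) (mat_scale (w - w0) D)) / cmod (w - w0)" if "w \<noteq> w0" for w
  proof -
    have "in_roe (F w)" "in_roe (F w0)" using F unfolding entire_ext_def by blast+
    then obtain C1 C2 C3 where "op_bounded (F w) C1" "op_bounded (F w0) C2" "op_bounded D C3"
      using D(1) in_roe_op_bounded by metis
    then obtain C where C: "op_bounded (mat_sub (mat_sub (F w) (F w0)) (mat_scale (w - w0) D)) C"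
      using op_bounded_sub op_bounded_scale by blast
    have "(F w y x - F w0 y x) / (w - w0) - D y x =
        (mat_sub (mat_sub (F w) (F w0)) (mat_scale (w - w0) D)) y x / (w - w0)"
      using that unfolding mat_sub_def mat_scale_def by (simp add: diff_divide_distrib)
    moreover have "cmod (mat_sub (mat_sub (F w) (F w0)) (mat_scale (w - w0) D) y x / (w - w0)) \<le>
        opnorm (mat_sub (mat_sub (F w) (F w0)) (mat_scale (w - w0) D)) / cmod (w - w0)"
      unfolding norm_divide by (rule divide_right_mono[OF op_bounded_entry_le_opnorm[OF C]]) simp
    ultimately show ?thesis by simp
  qed
  have "((\<lambda>w. (F w y x - F w0 y x) / (w - w0) - D y x) \<longlongrightarrow> 0) (at w0)"
  proof (rule Lim_null_comparison[OF _ D(2)])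
    show "\<forall>\<^sub>F w in at w0. cmod ((F w y x - F w0 y x) / (w - w0) - D y x) \<le>
       opnorm (mat_sub (mat_sub (F w) (F w0)) (mat_scale (w - w0) D)) / cmod (w - w0)"
      using eventually_neq_at_within[of w0 w0 UNIV] by (rule eventually_mono) (rule bound)
  qed
  then have "((\<lambda>w. F w y x) has_field_derivative D y x) (at w0)"
    unfolding has_field_derivative_iff by (subst Lim_null) simp
  then show ?thesis unfolding field_differentiable_def by blast
qed

text \<open>Identity theorem: both sides are entire in \<open>z\<close> and agree on the real axis.\<close>
lemma entire_ext_entry:
  assumes F: "entire_ext h b F"
  shows "F z y x = exp (\<i> * z * complex_of_real (h y - h x)) * b y x"
proof -
  define K where "K w = exp (\<i> * w * complex_of_real (h y - h x)) * b y x" for w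
  have "(\<lambda>w. F w y x) holomorphic_on UNIV"
    unfolding holomorphic_on_def using entire_ext_entry_differentiable[OF F] by simp
  moreover have "K holomorphic_on UNIV" unfolding K_def by (intro holomorphic_intros)
  ultimately have hol: "(\<lambda>w. F w y x - K w) holomorphic_on UNIV" by (intro holomorphic_intros)
  have "F z y x - K z = 0"
  proof (rule analytic_continuation[OF hol open_UNIV connected_UNIV subset_UNIV UNIV_I
        zero_islimpt_Reals _ UNIV_I])
    fix w :: complex assume "w \<in> \<real>"
    then obtain t where t: "w = complex_of_real t" by (auto elim: Reals_cases)
    have "F w y x = sigma h t b y x" unfolding t using F unfolding entire_ext_def by simp
    then show "F w y x - K w = 0" unfolding K_def t sigma_entry by simp
  qed
  then show ?thesis unfolding K_def by simp
qed

lemma exp_imaginary_beta: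
  "exp (\<i> * (\<i> * complex_of_real \<beta>) * complex_of_real (s - t)) = complex_of_real (exp (\<beta> * (t - s)))"
proof -
  have "\<i> * (\<i> * complex_of_real \<beta>) * complex_of_real (s - t) = complex_of_real (\<beta> * (t - s))"
    by (simp add: algebra_simps flip: mult.assoc)
  then show ?thesis by (simp flip: exp_of_real)
qed

lemma norm_exp_minus_one_minus_le:
  fixes u :: complex
  assumes "cmod u \<le> 1"
  shows "cmod (exp u - 1 - u) \<le> (cmod u)\<^sup>2"
proof -
  define r where "r = cmod u"
  have s1: "(\<lambda>k. u ^ (k + 2) /\<^sub>R fact (k + 2)) sums (exp u - (\<Sum>k<2. u ^ k /\<^sub>R fact k))"
    by (intro sums_split_initial_segment exp_converges)
  have s2: "(\<lambda>k. r ^ (k + 2) /\<^sub>R fact (k + 2)) sums (exp r - (\<Sum>k<2. r ^ k /\<^sub>R fact k))"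
    by (intro sums_split_initial_segment exp_converges)
  have e1: "(\<Sum>k<2. u ^ k /\<^sub>R fact k) = 1 + u" by (simp add: numeral_2_eq_2)
  have e2: "(\<Sum>k<2. r ^ k /\<^sub>R fact k) = 1 + r" by (simp add: numeral_2_eq_2)
  have norm_term: "norm (u ^ (k + 2) /\<^sub>R fact (k + 2)) = r ^ (k + 2) /\<^sub>R fact (k + 2)" for k
    unfolding r_def by (simp add: norm_power norm_mult del: power_Suc power_add)
  have "exp u - 1 - u = (\<Sum>k. u ^ (k + 2) /\<^sub>R fact (k + 2))"
    using s1 e1 by (simp add: sums_iff)
  also have "norm \<dots> \<le> (\<Sum>k. norm (u ^ (k + 2) /\<^sub>R fact (k + 2)))"
    by (rule summable_norm) (unfold norm_term, rule sums_summable[OF s2])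
  also have "\<dots> = exp r - 1 - r" unfolding norm_term using s2 e2 by (simp add: sums_iff)
  also have "\<dots> \<le> r\<^sup>2" using exp_bound[of r] assms unfolding r_def by simp
  finally show ?thesis unfolding r_def .
qed

lemma norm_exp_i_mult_le:
  assumes "\<bar>t\<bar> \<le> s"
  shows "cmod (exp (\<i> * z * complex_of_real t)) \<le> exp (cmod z * s)"
proof -
  have "cmod (exp (\<i> * z * complex_of_real t)) \<le> exp (cmod (\<i> * z * complex_of_real t))"
    by (rule norm_exp)
  also have "cmod (\<i> * z * complex_of_real t) = cmod z * \<bar>t\<bar>" by (simp add: norm_mult)
  also have "cmod z * \<bar>t\<bar> \<le> cmod z * s" using assms by (simp add: mult_left_mono)
  finally show ?thesis by simp
qed

lemma exp_phase_remainder: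
  assumes t: "\<bar>t\<bar> \<le> s" and w: "cmod (w - z) * s \<le> 1"
  shows "cmod (exp (\<i> * w * complex_of_real t) - exp (\<i> * z * complex_of_real t) -
      (w - z) * (\<i> * complex_of_real t * exp (\<i> * z * complex_of_real t)))
    \<le> exp (cmod z * s) * s\<^sup>2 * (cmod (w - z))\<^sup>2"
proof -
  define u where "u = \<i> * (w - z) * complex_of_real t"
  have u: "cmod u \<le> cmod (w - z) * s"
    unfolding u_def norm_mult using t by (simp add: mult_left_mono)
  have "exp (\<i> * w * complex_of_real t) = exp (\<i> * z * complex_of_real t) * exp u"
    unfolding u_def by (simp add: mult_exp_exp algebra_simps)
  then have "exp (\<i> * w * complex_of_real t) - exp (\<i> * z * complex_of_real t) -
      (w - z) * (\<i> * complex_of_real t * exp (\<i> * z * complex_of_real t)) =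
      exp (\<i> * z * complex_of_real t) * (exp u - 1 - u)"
    unfolding u_def by (simp add: algebra_simps)
  also have "cmod \<dots> \<le> exp (cmod z * s) * (cmod (w - z) * s)\<^sup>2"
    unfolding norm_mult
  proof (rule mult_mono)
    have "cmod (exp u - 1 - u) \<le> (cmod u)\<^sup>2"
      using u w by (intro norm_exp_minus_one_minus_le) linarith
    also have "\<dots> \<le> (cmod (w - z) * s)\<^sup>2" using u by (simp add: power_mono)
    finally show "cmod (exp u - 1 - u) \<le> (cmod (w - z) * s)\<^sup>2" .
  qed (use norm_exp_i_mult_le[OF t] in auto)
  finally show ?thesis by (simp add: power_mult_distrib mult_ac)
qed

lemma graph_mat_exp_derivative:
  assumes inj: "inj_on f A" and \<theta>: "\<And>x. x \<in> A \<Longrightarrow> \<bar>\<theta> x\<bar> \<le> s" and s: "0 \<le> s"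
  shows "((\<lambda>w. opnorm (mat_sub
      (mat_sub (graph_mat f A (\<lambda>x. exp (\<i> * w * complex_of_real (\<theta> x))))
               (graph_mat f A (\<lambda>x. exp (\<i> * z * complex_of_real (\<theta> x)))))
      (mat_scale (w - z)
        (graph_mat f A (\<lambda>x. \<i> * complex_of_real (\<theta> x) * exp (\<i> * z * complex_of_real (\<theta> x))))))
    / cmod (w - z)) \<longlongrightarrow> 0) (at z)"
    (is "((\<lambda>w. opnorm (?M w) / cmod (w - z)) \<longlongrightarrow> 0) (at z)")
proof (rule Lim_null_comparison)
  define K where "K = exp (cmod z * s) * s\<^sup>2"
  have K: "0 \<le> K" unfolding K_def by simp
  have op_M: "op_bounded (?M w) (K * (cmod (w - z))\<^sup>2)" if "cmod (w - z) * s \<le> 1" for w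
    unfolding graph_mat_sub graph_mat_scale
  proof (rule op_bounded_graph_mat[OF inj])
    fix x assume "x \<in> A"
    show "cmod (exp (\<i> * w * complex_of_real (\<theta> x)) - exp (\<i> * z * complex_of_real (\<theta> x)) -
        (w - z) * (\<i> * complex_of_real (\<theta> x) * exp (\<i> * z * complex_of_real (\<theta> x))))
      \<le> K * (cmod (w - z))\<^sup>2"
      using exp_phase_remainder[OF \<theta>[OF \<open>x \<in> A\<close>] that] unfolding K_def by simp
  qed (use K in simp)
  show "\<forall>\<^sub>F w in at z. norm (opnorm (?M w) / cmod (w - z)) \<le> K * cmod (w - z)"
    unfolding eventually_at
  proof (intro exI conjI allI impI ballI)
    show "0 < 1 / (s + 1)" using s by simp
    fix w :: complex assume w: "w \<noteq> z \<and> dist w z < 1 / (s + 1)"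
    then have "cmod (w - z) * (s + 1) < 1" using s by (simp add: dist_norm field_simps)
    then have "cmod (w - z) * s \<le> 1" by (simp add: algebra_simps) (smt (verit) norm_ge_zero)
    then have "op_bounded (?M w) (K * (cmod (w - z))\<^sup>2)" by (rule op_M)
    then have "0 \<le> opnorm (?M w)" "opnorm (?M w) \<le> K * (cmod (w - z))\<^sup>2"
      using opnorm_nonneg opnorm_le_op_bounded by blast+
    then show "norm (opnorm (?M w) / cmod (w - z)) \<le> K * cmod (w - z)"
      using w by (simp add: divide_le_eq power2_eq_square mult.assoc)
  qed
  have "((\<lambda>w. K * cmod (w - z)) \<longlongrightarrow> K * cmod (z - z)) (at z)" by (intro tendsto_intros)
  then show "((\<lambda>w. K * cmod (w - z)) \<longlongrightarrow> 0) (at z)" by simp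
qed

lemma entire_ext_graph_mat:
  assumes h: "coarse_fun h" and f: "partial_translation f A"
  shows "entire_ext h (graph_mat f A (\<lambda>_. 1))
           (\<lambda>z. graph_mat f A (\<lambda>x. exp (\<i> * z * complex_of_real (h (f x) - h x))))"
proof -
  define \<theta> where "\<theta> x = h (f x) - h x" for x
  have inj: "inj_on f A" using f unfolding partial_translation_def by blast
  obtain R where R: "\<And>x. x \<in> A \<Longrightarrow> dist x (f x) \<le> R" using f unfolding partial_translation_def by blast
  obtain s where s: "0 \<le> s" "\<And>x y. dist x y \<le> R \<Longrightarrow> \<bar>h x - h y\<bar> \<le> s"
    using coarse_fun_bounded[OF h] by blast
  have \<theta>: "\<bar>\<theta> x\<bar> \<le> s" if "x \<in> A" for x
    using s(2)[of "f x" x] R[OF that] unfolding \<theta>_def by (simp add: dist_commute)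
  show ?thesis
    unfolding entire_ext_def \<theta>_def[symmetric]
  proof (intro conjI allI)
    show "in_roe (graph_mat f A (\<lambda>x. exp (\<i> * z * complex_of_real (\<theta> x))))" for z
      by (rule in_roe_graph_mat[OF f norm_exp_i_mult_le[OF \<theta>]])
    show "graph_mat f A (\<lambda>x. exp (\<i> * complex_of_real t * complex_of_real (\<theta> x))) =
        sigma h t (graph_mat f A (\<lambda>_. 1))" for t
      unfolding \<theta>_def by (intro ext) (auto simp: sigma_entry graph_mat_def)
    fix z
    let ?D = "graph_mat f A (\<lambda>x. \<i> * complex_of_real (\<theta> x) * exp (\<i> * z * complex_of_real (\<theta> x)))"
    have "in_roe ?D"
    proof (rule in_roe_graph_mat[OF f])
      fix x assume "x \<in> A"
      then show "cmod (\<i> * complex_of_real (\<theta> x) * exp (\<i> * z * complex_of_real (\<theta> x))) \<le>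
          s * exp (cmod z * s)"
        unfolding norm_mult using \<theta> norm_exp_i_mult_le[OF \<theta>] s(1) by (simp add: mult_mono)
    qed
    then show "\<exists>D. in_roe D \<and>
        ((\<lambda>w. opnorm (mat_sub (mat_sub (graph_mat f A (\<lambda>x. exp (\<i> * w * complex_of_real (\<theta> x))))
          (graph_mat f A (\<lambda>x. exp (\<i> * z * complex_of_real (\<theta> x))))) (mat_scale (w - z) D)) /
          cmod (w - z)) \<longlongrightarrow> 0) (at z)"
      using graph_mat_exp_derivative[of f A \<theta> s, OF inj \<theta> s(1)] by blast
  qed
qed

section \<open>Uniform approximation by finitely valued functions\<close>

lemma eq_if_norm_diff_le_eps:
  fixes a b :: complex
  assumes "\<And>\<delta>. 0 < \<delta> \<Longrightarrow> cmod (a - b) \<le> C * \<delta>"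
  shows "a = b"
proof -
  have "cmod (a - b) \<le> 0 + e" if "0 < e" for e
  proof (cases "C > 0")
    case True
    then show ?thesis using assms[of "e / C"] that by simp
  next
    case False
    then have "C * 1 \<le> 0" by simp
    then show ?thesis using assms[of 1] that by linarith
  qed
  then have "cmod (a - b) \<le> 0" by (rule field_le_epsilon)
  then show ?thesis by simp
qed

lemma floor_abs_le: "\<bar>t\<bar> \<le> K \<Longrightarrow> \<bar>\<lfloor>t\<rfloor>\<bar> \<le> \<lceil>K\<rceil>"
proof -
  assume "\<bar>t\<bar> \<le> K"
  then have "\<lfloor>-K\<rfloor> \<le> \<lfloor>t\<rfloor>" "\<lfloor>t\<rfloor> \<le> \<lfloor>K\<rfloor>" by (auto intro: floor_mono simp: abs_le_iff)
  moreover have "\<lfloor>K\<rfloor> \<le> \<lceil>K\<rceil>" by (rule floor_le_ceiling)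
  ultimately show ?thesis unfolding abs_le_iff floor_minus by linarith
qed

definition grid_round :: "real \<Rightarrow> complex \<Rightarrow> complex" where
  "grid_round \<delta> z = complex_of_real \<delta> * (of_int \<lfloor>Re z / \<delta>\<rfloor> + \<i> * of_int \<lfloor>Im z / \<delta>\<rfloor>)"

lemma grid_round_close:
  assumes "0 < \<delta>"
  shows "cmod (z - grid_round \<delta> z) \<le> 2 * \<delta>"
proof -
  have part: "\<bar>t - \<delta> * of_int \<lfloor>t / \<delta>\<rfloor>\<bar> \<le> \<delta>" for t
  proof -
    have "\<delta> * of_int \<lfloor>t / \<delta>\<rfloor> \<le> \<delta> * (t / \<delta>)"
      using assms by (intro mult_left_mono) auto
    moreover have "\<delta> * (t / \<delta>) < \<delta> * (of_int \<lfloor>t / \<delta>\<rfloor> + 1)"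
      using assms by (intro mult_strict_left_mono) auto
    ultimately have "\<delta> * of_int \<lfloor>t / \<delta>\<rfloor> \<le> t" "t < \<delta> * of_int \<lfloor>t / \<delta>\<rfloor> + \<delta>"
      using assms by (simp_all add: algebra_simps)
    then show ?thesis by linarith
  qed
  have "cmod (z - grid_round \<delta> z) \<le> \<bar>Re (z - grid_round \<delta> z)\<bar> + \<bar>Im (z - grid_round \<delta> z)\<bar>"
    by (rule cmod_le)
  also have "\<dots> \<le> \<delta> + \<delta>"
    unfolding grid_round_def using part[of "Re z"] part[of "Im z"] by (intro add_mono) simp_all
  finally show ?thesis by simp
qed

lemma finite_grid_round_image:
  assumes "0 < \<delta>"
  shows "finite (grid_round \<delta> ` {z. cmod z \<le> K})"
proof -
  define M where "M = \<lceil>K / \<delta>\<rceil>"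
  define I where "I = {i :: int. \<bar>i\<bar> \<le> M}"
  have "finite I" unfolding I_def abs_le_iff by (simp add: finite_subset[of _ "{-M..M}"] subset_iff)
  have floor_mem: "\<lfloor>t / \<delta>\<rfloor> \<in> I" if "\<bar>t\<bar> \<le> K" for t
  proof -
    have "\<bar>t / \<delta>\<bar> \<le> K / \<delta>" using that assms by (simp add: divide_right_mono)
    then show ?thesis using floor_abs_le unfolding I_def M_def by blast
  qed
  have "grid_round \<delta> ` {z. cmod z \<le> K} \<subseteq>
      (\<lambda>(i, j). complex_of_real \<delta> * (of_int i + \<i> * of_int j)) ` (I \<times> I)"
  proof
    fix w assume "w \<in> grid_round \<delta> ` {z. cmod z \<le> K}"
    then obtain z where z: "cmod z \<le> K" "w = grid_round \<delta> z" by blast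
    have "\<bar>Re z\<bar> \<le> K" "\<bar>Im z\<bar> \<le> K" using z(1) abs_Re_le_cmod abs_Im_le_cmod order_trans by blast+
    then show "w \<in> (\<lambda>(i, j). complex_of_real \<delta> * (of_int i + \<i> * of_int j)) ` (I \<times> I)"
      unfolding z(2) grid_round_def using floor_mem by force
  qed
  then show ?thesis using \<open>finite I\<close> by (meson finite_SigmaI finite_imageI finite_subset)
qed

lemma sum_level_sets:
  fixes w :: "'a \<Rightarrow> 'b::comm_ring_1"
  assumes "finite V" "\<And>x. x \<in> A \<Longrightarrow> w x \<in> V"
  shows "(\<Sum>v\<in>V. v * (if x \<in> A \<and> w x = v then c else 0)) = (if x \<in> A then w x * c else 0)"
proof (cases "x \<in> A")
  case True
  have "(\<Sum>v\<in>V. v * (if x \<in> A \<and> w x = v then c else 0)) = (\<Sum>v\<in>V. if v = w x then w x * c else 0)"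
    using True by (intro sum.cong) auto
  then show ?thesis using True assms by simp
qed simp

section \<open>KMS states induced by states on \<open>\<ell>\<^sub>\<infinity>(X)\<close>\<close>

context
  fixes \<phi> :: "('a::metric_space \<Rightarrow> complex) \<Rightarrow> complex"
  assumes state: "linfty_state \<phi>"
begin

lemma roe_state_cond_exp: "roe_state (\<lambda>a. \<phi> (cond_exp a))"
  unfolding roe_state_def
proof (intro conjI allI impI)
  fix a b :: "'a mat" assume a: "in_roe a" and b: "in_roe b"
  have "cond_exp (mat_add a b) = (\<lambda>x. cond_exp a x + cond_exp b x)"
    unfolding cond_exp_def mat_add_def by simp
  then show "\<phi> (cond_exp (mat_add a b)) = \<phi> (cond_exp a) + \<phi> (cond_exp b)"
    using linfty_state_add[OF state in_linfty_cond_exp[OF a] in_linfty_cond_exp[OF b]] by simp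
next
  fix c and a :: "'a mat" assume a: "in_roe a"
  have "cond_exp (mat_scale c a) = (\<lambda>x. c * cond_exp a x)"
    unfolding cond_exp_def mat_scale_def by simp
  then show "\<phi> (cond_exp (mat_scale c a)) = c * \<phi> (cond_exp a)"
    using linfty_state_scale[OF state in_linfty_cond_exp[OF a]] by simp
next
  fix a :: "'a mat" assume "in_roe a"
  then obtain C where C: "sections_bounded a C" using in_roe_sections_bounded by blast
  define r where "r x = infsum (\<lambda>y. (cmod (a y x))\<^sup>2) UNIV" for x
  have "cond_exp (mat_mult (mat_adj a) a) x = complex_of_real (r x)" for x
  proof -
    have "((\<lambda>y. complex_of_real ((cmod (a y x))\<^sup>2)) has_sum complex_of_real (r x)) UNIV"
      unfolding r_def using sections_bounded_column_infsum[OF C, of x] by (intro has_sum_of_real) auto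
    then have "((\<lambda>y. cnj (a y x) * a y x) has_sum complex_of_real (r x)) UNIV"
      by (simp add: mult.commute complex_norm_square flip: of_real_power)
    then show ?thesis unfolding cond_exp_def mat_mult_def mat_adj_def by (rule infsumI)
  qed
  moreover have "0 \<le> r x" "r x \<le> C\<^sup>2" for x
    unfolding r_def using sections_bounded_column_infsum[OF C, of x] by (auto intro: infsum_nonneg)
  ultimately show "nonneg_cplx (\<phi> (cond_exp (mat_mult (mat_adj a) a)))"
    using linfty_state_nonneg[OF state, of r "C\<^sup>2"] by presburger
next
  show "\<phi> (cond_exp mat_one) = 1"
    using linfty_state_one[OF state] unfolding cond_exp_def mat_one_def by simp
qed

text \<open>The KMS condition for \<open>b\<close> the partial isometry along \<open>f\<close> and \<open>a\<close> its adjoint.\<close>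
lemma kms_state_translation_identity:
  assumes h: "coarse_fun h" and kms: "kms_state h \<beta> (\<lambda>a. \<phi> (cond_exp a))"
    and f: "partial_translation f A"
  shows "\<phi> (chi (f ` A)) = \<phi> (g_fun h \<beta> f A)"
proof -
  let ?b = "graph_mat f A (\<lambda>_. 1)"
    and ?F = "\<lambda>z. graph_mat f A (\<lambda>x. exp (\<i> * z * complex_of_real (h (f x) - h x)))"
    and ?a = "graph_mat (inv_into A f) (f ` A) (\<lambda>_. 1)"
  have inj: "inj_on f A" using f unfolding partial_translation_def by blast
  have "in_roe ?a" by (rule in_roe_graph_mat[OF partial_translation_inv[OF f], where B = 1]) simp
  moreover have "in_roe ?b" by (rule in_roe_graph_mat[OF f, where B = 1]) simp
  ultimately have "\<phi> (cond_exp (mat_mult ?a (?F (\<i> * complex_of_real \<beta>)))) =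
      \<phi> (cond_exp (mat_mult ?b ?a))"
    using kms entire_ext_graph_mat[OF h f] unfolding kms_state_def by blast
  moreover have "cond_exp (mat_mult ?a (?F (\<i> * complex_of_real \<beta>))) = g_fun h \<beta> f A"
    by (rule ext) (simp only: cond_exp_graph_mat_inv_mult[OF inj] g_fun_def exp_imaginary_beta)
  moreover have "cond_exp (mat_mult ?b ?a) = chi (f ` A)"
    by (rule ext) (simp add: cond_exp_mult_graph_mat_inv[OF inj] chi_def)
  ultimately show ?thesis by simp
qed

lemma cond_exp_mult_left_perturbation:
  assumes "sections_bounded a A" "sections_bounded a' A'" "sections_bounded (mat_sub a a') D"
    and "sections_bounded c C"
  shows "cmod (\<phi> (cond_exp (mat_mult a c)) - \<phi> (cond_exp (mat_mult a' c))) \<le> 2 * (D * C)"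
proof -
  have "\<phi> (cond_exp (mat_mult a c)) - \<phi> (cond_exp (mat_mult a' c)) =
      \<phi> (\<lambda>x. cond_exp (mat_mult a c) x - cond_exp (mat_mult a' c) x)"
    using assms by (intro linfty_state_diff[OF state, symmetric] in_linfty_cond_exp_mult)
  also have "\<dots> = \<phi> (cond_exp (mat_mult (mat_sub a a') c))"
    by (simp add: cond_exp_mult_sub_left[OF assms(1,2,4)])
  also have "cmod \<dots> \<le> 2 * (D * C)"
    by (rule linfty_state_norm_bound[OF state]) (rule cond_exp_mult_bound[OF assms(3,4)])
  finally show ?thesis .
qed

lemma cond_exp_mult_right_perturbation:
  assumes "sections_bounded a A" "sections_bounded a' A'" "sections_bounded (mat_sub a a') D"
    and "sections_bounded b B"
  shows "cmod (\<phi> (cond_exp (mat_mult b a)) - \<phi> (cond_exp (mat_mult b a'))) \<le> 2 * (B * D)"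
proof -
  have "\<phi> (cond_exp (mat_mult b a)) - \<phi> (cond_exp (mat_mult b a')) =
      \<phi> (\<lambda>x. cond_exp (mat_mult b a) x - cond_exp (mat_mult b a') x)"
    using assms by (intro linfty_state_diff[OF state, symmetric] in_linfty_cond_exp_mult)
  also have "\<dots> = \<phi> (cond_exp (mat_mult b (mat_sub a a')))"
    by (simp add: cond_exp_mult_sub_right[OF assms(1,2,4)])
  also have "cmod \<dots> \<le> 2 * (B * D)"
    by (rule linfty_state_norm_bound[OF state]) (rule cond_exp_mult_bound[OF assms(4,3)])
  finally show ?thesis .
qed

context
  fixes h :: "'a \<Rightarrow> real" and \<beta> :: real
  assumes translation: "\<And>f A. partial_translation f A \<Longrightarrow> \<phi> (chi (f ` A)) = \<phi> (g_fun h \<beta> f A)"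
begin

text \<open>Split \<open>A\<close> into the level sets of \<open>w\<close> and apply the hypothesis to each.\<close>
lemma translation_identity_finite_range:
  assumes f: "partial_translation f A" and G: "\<And>x. x \<in> A \<Longrightarrow> exp (\<beta> * (h x - h (f x))) \<le> G"
    and V: "finite V" "\<And>x. x \<in> A \<Longrightarrow> w x \<in> V"
  shows "\<phi> (\<lambda>x. w x * g_fun h \<beta> f A x) = \<phi> (\<lambda>y. w (inv_into A f y) * chi (f ` A) y)"
proof -
  have inj: "inj_on f A" using f unfolding partial_translation_def by blast
  define L where "L v = {x \<in> A. w x = v}" for v
  have "w x * g_fun h \<beta> f A x = (\<Sum>v\<in>V. v * g_fun h \<beta> f (L v) x)" for x
    using sum_level_sets[where A = A and w = w, OF V, where x = x
        and c = "complex_of_real (exp (\<beta> * (h x - h (f x))))"]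
    by (simp add: g_fun_def L_def)
  moreover have "w (inv_into A f y) * chi (f ` A) y = (\<Sum>v\<in>V. v * chi (f ` L v) y)" for y
  proof -
    have "y \<in> f ` L v \<longleftrightarrow> y \<in> f ` A \<and> w (inv_into A f y) = v" for v
      using inj by (auto simp: L_def inv_into_f_f f_inv_into_f inv_into_into)
    then show ?thesis
      using sum_level_sets[where V = V and A = "f ` A" and w = "\<lambda>y. w (inv_into A f y)" and x = y
          and c = 1] V inv_into_into[of _ f A]
      by (simp add: chi_def)
  qed
  moreover have "in_linfty (g_fun h \<beta> f (L v))" for v
    by (rule in_linftyI[OF norm_g_fun_le[where A = "L v" and h = h and f = f and G = G]])
      (use G in \<open>auto simp: L_def\<close>)
  moreover have "\<phi> (g_fun h \<beta> f (L v)) = \<phi> (chi (f ` L v))" for v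
    using translation partial_translation_subset[OF f] by (simp add: L_def)
  ultimately show ?thesis
    by (simp add: linfty_state_sum_scale[OF state V(1)] in_linfty_chi)
qed

text \<open>Approximate \<open>u\<close> uniformly by the finitely valued \<open>grid_round \<delta> \<circ> u\<close>.\<close>
lemma translation_identity_bounded_weight:
  assumes f: "partial_translation f A" and G: "\<And>x. x \<in> A \<Longrightarrow> exp (\<beta> * (h x - h (f x))) \<le> G"
    and u: "\<And>x. cmod (u x) \<le> K"
  shows "\<phi> (\<lambda>x. u x * g_fun h \<beta> f A x) = \<phi> (\<lambda>y. u (inv_into A f y) * chi (f ` A) y)"
proof (rule eq_if_norm_diff_le_eps)
  let ?g = "g_fun h \<beta> f A" and ?G = "max G 0" and ?inv = "inv_into A f"
  have g: "cmod (?g x) \<le> ?G" for x by (rule norm_g_fun_le[where h = h and f = f, OF G])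
  have chi: "cmod (chi (f ` A) x) \<le> 1" for x by (simp add: chi_def)
  fix \<delta> :: real assume \<delta>: "0 < \<delta>"
  define w where "w x = grid_round \<delta> (u x)" for x
  have close: "cmod (u x - w x) \<le> 2 * \<delta>" for x unfolding w_def by (rule grid_round_close[OF \<delta>])
  have w: "cmod (w x) \<le> K + 2 * \<delta>" for x
    using close[of x] u[of x] norm_triangle_ineq3[of "u x" "w x"] by linarith
  have bounded: "in_linfty u" "in_linfty w" "in_linfty (\<lambda>y. u (?inv y))" "in_linfty (\<lambda>y. w (?inv y))"
    by (rule in_linftyI, rule u w)+
  have "\<phi> (\<lambda>x. w x * ?g x) = \<phi> (\<lambda>y. w (?inv y) * chi (f ` A) y)"
    by (rule translation_identity_finite_range[OF f G finite_grid_round_image[OF \<delta>, of K]])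
      (use u in \<open>auto simp: w_def\<close>)
  moreover have "cmod (\<phi> (\<lambda>x. u x * ?g x) - \<phi> (\<lambda>x. w x * ?g x)) \<le> 2 * (2 * \<delta> * ?G)"
    by (rule linfty_state_mult_diff_bound[OF state bounded(1,2) in_linftyI[OF g] close g])
  moreover have "cmod (\<phi> (\<lambda>y. w (?inv y) * chi (f ` A) y) - \<phi> (\<lambda>y. u (?inv y) * chi (f ` A) y)) \<le>
      2 * (2 * \<delta> * 1)"
  proof (rule linfty_state_mult_diff_bound[OF state bounded(4,3) in_linfty_chi _ chi])
    show "cmod (w (?inv y) - u (?inv y)) \<le> 2 * \<delta>" for y by (metis close norm_minus_commute)
  qed
  ultimately show "cmod (\<phi> (\<lambda>x. u x * ?g x) - \<phi> (\<lambda>y. u (?inv y) * chi (f ` A) y)) \<le>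
      (4 * ?G + 4) * \<delta>"
    using norm_triangle_ineq[of "\<phi> (\<lambda>x. u x * ?g x) - \<phi> (\<lambda>x. w x * ?g x)"
        "\<phi> (\<lambda>y. w (?inv y) * chi (f ` A) y) - \<phi> (\<lambda>y. u (?inv y) * chi (f ` A) y)"]
    by (simp add: algebra_simps)
qed

lemma translation_identity_graph_kernel:
  assumes f: "partial_translation f A" and R: "\<And>x. x \<in> A \<Longrightarrow> dist x (f x) \<le> R"
    and fin: "\<And>x::'a. finite (cball x R)"
    and G: "\<And>x. x \<in> A \<Longrightarrow> exp (\<beta> * (h x - h (f x))) \<le> G"
    and supp: "\<And>x y. k x y \<noteq> 0 \<Longrightarrow> x \<in> A \<and> y = f x" and K: "\<And>x y. cmod (k x y) \<le> K"
  shows "\<phi> (\<lambda>x. \<Sum>y\<in>cball x R. k x y * complex_of_real (exp (\<beta> * (h x - h y)))) =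
         \<phi> (\<lambda>y. \<Sum>x\<in>cball y R. k x y)"
proof -
  have inj: "inj_on f A" using f unfolding partial_translation_def by blast
  have left: "(\<Sum>y\<in>cball x R. k x y * complex_of_real (exp (\<beta> * (h x - h y)))) =
      k x (f x) * g_fun h \<beta> f A x" for x
  proof -
    have "(\<Sum>y\<in>cball x R. k x y * complex_of_real (exp (\<beta> * (h x - h y)))) =
        (\<Sum>y\<in>cball x R. if y = f x then k x (f x) * complex_of_real (exp (\<beta> * (h x - h (f x)))) else 0)"
      by (rule sum.cong[OF refl]) (use supp in force)
    then show ?thesis using R[of x] fin[of x] supp[of x "f x"] by (auto simp: g_fun_def)
  qed
  have right: "(\<Sum>x\<in>cball y R. k x y) = k (inv_into A f y) (f (inv_into A f y)) * chi (f ` A) y" for y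
  proof (cases "y \<in> f ` A")
    case True
    then have x: "inv_into A f y \<in> A" "f (inv_into A f y) = y" by (auto simp: inv_into_into f_inv_into_f)
    have "(\<Sum>x\<in>cball y R. k x y) = (\<Sum>x\<in>cball y R. if x = inv_into A f y then k x y else 0)"
      by (rule sum.cong[OF refl]) (use supp inj in \<open>force simp: inv_into_f_f\<close>)
    moreover have "inv_into A f y \<in> cball y R" using R[OF x(1)] x(2) by (simp add: dist_commute)
    ultimately show ?thesis using True x(2) fin[of y] by (simp add: chi_def)
  next
    case False
    then have "k x y = 0" for x using supp by blast
    then show ?thesis using False by (simp add: chi_def)
  qed
  show ?thesis
    unfolding left right by (rule translation_identity_bounded_weight[OF f G K])
qed

lemma translation_identity_label_piece:
  fixes idx :: "'a \<Rightarrow> 'a \<Rightarrow> nat" and i j :: nat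
  assumes inj: "\<And>x. inj_on (idx x) (cball x R)" and fin: "\<And>x::'a. finite (cball x R)"
    and G: "\<And>x y. dist x y \<le> R \<Longrightarrow> exp (\<beta> * (h x - h y)) \<le> G" and K: "\<And>x y. cmod (k x y) \<le> K"
  defines "k' \<equiv> \<lambda>x y. if y \<in> cball x R \<and> idx x y = i \<and> idx y x = j then k x y else 0"
  shows "\<phi> (\<lambda>x. \<Sum>y\<in>cball x R. k' x y * complex_of_real (exp (\<beta> * (h x - h y)))) =
         \<phi> (\<lambda>y. \<Sum>x\<in>cball y R. k' x y)"
proof -
  obtain f A where f: "partial_translation f A" and R: "\<And>x. x \<in> A \<Longrightarrow> dist x (f x) \<le> R"
    and pairs: "\<And>x y. y \<in> cball x R \<Longrightarrow> idx x y = i \<and> idx y x = j \<longleftrightarrow> x \<in> A \<and> y = f x"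
    using label_pairs_partial_translation[OF inj] by blast
  show ?thesis
  proof (rule translation_identity_graph_kernel[OF f R fin])
    show "exp (\<beta> * (h x - h (f x))) \<le> G" if "x \<in> A" for x using G R[OF that] by blast
    show "k' x y \<noteq> 0 \<Longrightarrow> x \<in> A \<and> y = f x" for x y
      using pairs[where x = x and y = y] by (auto simp: k'_def split: if_splits)
    have "0 \<le> K" using K norm_ge_zero order_trans by blast
    then show "cmod (k' x y) \<le> K" for x y using K by (simp add: k'_def)
  qed
qed

text \<open>Labelling the \<open>R\<close>-balls (possible by uniform local finiteness) cuts a kernel of
  propagation \<open>R\<close> into finitely many pieces, each supported on the graph of a partial translation.\<close>
lemma translation_identity_kernel:
  assumes ulf: "ulf TYPE('a)" and h: "coarse_fun h" and K: "\<And>x y. cmod (k x y) \<le> K"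
  shows "\<phi> (\<lambda>x. \<Sum>y\<in>cball x R. k x y * complex_of_real (exp (\<beta> * (h x - h y)))) =
         \<phi> (\<lambda>y. \<Sum>x\<in>cball y R. k x y)"
proof -
  let ?E = "\<lambda>x y. complex_of_real (exp (\<beta> * (h x - h y)))"
  obtain N and idx :: "'a \<Rightarrow> 'a \<Rightarrow> nat"
    where fin: "\<And>x::'a. finite (cball x R)" and card: "\<And>x::'a. card (cball x R) \<le> N"
    and inj: "\<And>x. inj_on (idx x) (cball x R)" and lt: "\<And>x y. y \<in> cball x R \<Longrightarrow> idx x y < N"
    using ulf_labelling[OF ulf] by blast
  obtain G where G: "\<And>x y. dist x y \<le> R \<Longrightarrow> exp (\<beta> * (h x - h y)) \<le> G"
    using coarse_fun_exp_bounded[OF h] by blast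
  have K0: "0 \<le> K" using K norm_ge_zero order_trans by blast
  define P where "P = {..<N} \<times> {..<N}"
  define kk where "kk p x y = (if y \<in> cball x R \<and> idx x y = fst p \<and> idx y x = snd p then k x y else 0)"
    for p x y
  have split: "k x y = (\<Sum>p\<in>P. kk p x y)" if "y \<in> cball x R" for x y
  proof -
    have "x \<in> cball y R" using that by (simp add: dist_commute)
    then have "(idx x y, idx y x) \<in> P" using lt that by (simp add: P_def)
    moreover have "(\<Sum>p\<in>P. kk p x y) = (\<Sum>p\<in>P. if p = (idx x y, idx y x) then k x y else 0)"
      using that by (intro sum.cong) (auto simp: kk_def prod_eq_iff)
    ultimately show ?thesis by (simp add: P_def)
  qed
  have "(\<Sum>y\<in>cball x R. k x y * ?E x y) = (\<Sum>p\<in>P. \<Sum>y\<in>cball x R. kk p x y * ?E x y)" for x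
  proof -
    have "(\<Sum>y\<in>cball x R. k x y * ?E x y) = (\<Sum>y\<in>cball x R. \<Sum>p\<in>P. kk p x y * ?E x y)"
      by (rule sum.cong[OF refl]) (simp add: split sum_distrib_right)
    then show ?thesis by (simp add: sum.swap[where B = P])
  qed
  moreover have "(\<Sum>x\<in>cball y R. k x y) = (\<Sum>p\<in>P. \<Sum>x\<in>cball y R. kk p x y)" for y
  proof -
    have "(\<Sum>x\<in>cball y R. k x y) = (\<Sum>x\<in>cball y R. \<Sum>p\<in>P. kk p x y)"
      by (rule sum.cong[OF refl]) (simp add: split dist_commute)
    then show ?thesis by (simp add: sum.swap[where B = P])
  qed
  moreover have "\<phi> (\<lambda>x. \<Sum>y\<in>cball x R. kk p x y * ?E x y) = \<phi> (\<lambda>y. \<Sum>x\<in>cball y R. kk p x y)" for p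
    unfolding kk_def by (rule translation_identity_label_piece[OF inj fin G K])
  moreover have "in_linfty (\<lambda>x. \<Sum>y\<in>cball x R. kk p x y * ?E x y)" for p
  proof (rule in_linfty_cball_sum[OF fin card])
    fix x y :: 'a assume "y \<in> cball x R"
    then show "cmod (kk p x y * ?E x y) \<le> K * G"
      unfolding norm_mult using K K0 G by (intro mult_mono) (auto simp: kk_def)
  qed
  moreover have "in_linfty (\<lambda>y. \<Sum>x\<in>cball y R. kk p x y)" for p
    using K K0 by (intro in_linfty_cball_sum[OF fin card, where B = K]) (simp add: kk_def)
  ultimately show ?thesis by (simp add: linfty_state_sum[OF state] P_def)
qed

lemma translation_identity_finite_prop:
  assumes ulf: "ulf TYPE('a)" and h: "coarse_fun h"
    and a: "finite_prop a" "sections_bounded a A" and b: "sections_bounded b B"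
    and c: "\<And>x y. c y x = complex_of_real (exp (\<beta> * (h x - h y))) * b y x"
  shows "\<phi> (cond_exp (mat_mult a c)) = \<phi> (cond_exp (mat_mult b a))"
proof -
  obtain R where R: "\<And>x y. a x y \<noteq> 0 \<Longrightarrow> dist x y \<le> R" using a(1) unfolding finite_prop_def by blast
  obtain N and idx :: "'a \<Rightarrow> 'a \<Rightarrow> nat" where fin: "\<And>x::'a. finite (cball x R)"
    using ulf_labelling[OF ulf] by blast
  have "cond_exp (mat_mult a c) x =
      (\<Sum>y\<in>cball x R. a x y * b y x * complex_of_real (exp (\<beta> * (h x - h y))))" for x
    unfolding cond_exp_def mat_mult_def
    by (subst infsum_finite_support(2)[OF fin]) (use R in \<open>force simp: c mult_ac\<close>)+
  then have "cond_exp (mat_mult a c) =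
      (\<lambda>x. \<Sum>y\<in>cball x R. a x y * b y x * complex_of_real (exp (\<beta> * (h x - h y))))" ..
  moreover have "cond_exp (mat_mult b a) y = (\<Sum>x\<in>cball y R. a x y * b y x)" for y
    unfolding cond_exp_def mat_mult_def
    by (subst infsum_finite_support(2)[OF fin]) (use R in \<open>force simp: dist_commute mult_ac\<close>)+
  then have "cond_exp (mat_mult b a) = (\<lambda>y. \<Sum>x\<in>cball y R. a x y * b y x)" ..
  moreover have "cmod (a x y * b y x) \<le> A * B" for x y
    unfolding norm_mult using sections_bounded_entry[OF a(2)] sections_bounded_entry[OF b]
    by (intro mult_mono) (auto simp: sections_bounded_nonneg[OF a(2)] sections_bounded_nonneg[OF b])
  ultimately show ?thesis
    using translation_identity_kernel[OF ulf h, of "\<lambda>x y. a x y * b y x" "A * B" R] by simp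
qed

text \<open>Approximate \<open>a\<close> in norm by finite-propagation operators.\<close>
lemma translation_identity_kms_state:
  assumes ulf: "ulf TYPE('a)" and h: "coarse_fun h"
  shows "kms_state h \<beta> (\<lambda>a. \<phi> (cond_exp a))"
  unfolding kms_state_def
proof (intro conjI allI impI)
  show "roe_state (\<lambda>a. \<phi> (cond_exp a))" by (rule roe_state_cond_exp)
  fix a b :: "'a mat" and F assume a: "in_roe a" and b: "in_roe b" and F: "entire_ext h b F"
  define c where "c = F (\<i> * complex_of_real \<beta>)"
  have c: "c y x = complex_of_real (exp (\<beta> * (h x - h y))) * b y x" for y x
    unfolding c_def entire_ext_entry[OF F] exp_imaginary_beta ..
  have "in_roe c" using F unfolding c_def entire_ext_def by blast
  then obtain Ca Cb Cc where Ca: "sections_bounded a Ca" and Cb: "sections_bounded b Cb"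
    and Cc: "sections_bounded c Cc"
    using a b in_roe_sections_bounded by metis
  show "\<phi> (cond_exp (mat_mult a c)) = \<phi> (cond_exp (mat_mult b a))"
  proof (rule eq_if_norm_diff_le_eps)
    fix \<epsilon> :: real assume "0 < \<epsilon>"
    then obtain a' where a': "bdd_op a'" "finite_prop a'" "sections_bounded (mat_sub a a') \<epsilon>"
      using in_roe_approx_finite_prop[OF a] by blast
    obtain Ca' where Ca': "sections_bounded a' Ca'"
      using a'(1) bdd_op_op_bounded op_bounded_sections_opnorm by blast
    have "\<phi> (cond_exp (mat_mult a' c)) = \<phi> (cond_exp (mat_mult b a'))"
      by (rule translation_identity_finite_prop[OF ulf h a'(2) Ca' Cb c])
    moreover have "cmod (\<phi> (cond_exp (mat_mult a c)) - \<phi> (cond_exp (mat_mult a' c))) \<le> 2 * (\<epsilon> * Cc)"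
      by (rule cond_exp_mult_left_perturbation[OF Ca Ca' a'(3) Cc])
    moreover have "cmod (\<phi> (cond_exp (mat_mult b a)) - \<phi> (cond_exp (mat_mult b a'))) \<le> 2 * (Cb * \<epsilon>)"
      by (rule cond_exp_mult_right_perturbation[OF Ca Ca' a'(3) Cb])
    ultimately show "cmod (\<phi> (cond_exp (mat_mult a c)) - \<phi> (cond_exp (mat_mult b a))) \<le>
        2 * (Cc + Cb) * \<epsilon>"
      using norm_triangle_ineq4[of "\<phi> (cond_exp (mat_mult a c)) - \<phi> (cond_exp (mat_mult a' c))"
          "\<phi> (cond_exp (mat_mult b a)) - \<phi> (cond_exp (mat_mult b a'))"]
      by (simp add: algebra_simps)
  qed
qed

end

end

theorem theorem2p2:
  fixes h :: "'a::metric_space \<Rightarrow> real" and \<beta> :: real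
    and \<phi> :: "('a \<Rightarrow> complex) \<Rightarrow> complex"
  assumes "ulf TYPE('a)"
    and "coarse_fun h"
    and "linfty_state \<phi>"
  shows "kms_state h \<beta> (\<lambda>a. \<phi> (cond_exp a)) \<longleftrightarrow>
    (\<forall>f A. partial_translation f A \<longrightarrow> \<phi> (chi (f ` A)) = \<phi> (g_fun h \<beta> f A))"
  using kms_state_translation_identity[OF assms(3,2)]
    translation_identity_kms_state[OF assms(3) _ assms(1,2)]
  by blast

end
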